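(* Let $n\ge1$ and $m$ be integers, $\beta>0$, $0<\gamma\le 1$. Let $(s,z)$ be the Nielsen–Olesen vortex profile (see context) and set $$x=(\gamma-1)z-\frac{2\gamma n+m}{2r},\qquad y=\gamma z-\frac{2\gamma n+m}{2r}.$$ Suppose real functions $u,v$ on $(0,\infty)$, not both identically zero, satisfy either the equations \begin{align*} &v''+\tfrac{v'}{r}-\tfrac{v}{r^2}+2\big(2y'u+yu'+\tfrac{1}{r}yu\big)-4vu^2-\gamma v s^2=0,\\ &v'y-vy'+\big(2y^2+\tfrac{\gamma}{2}s^2+2v^2\big)u=0, \end{align*} or these same equations linearized in $(u,v)$ (i.e. with the terms $-4vu^2$ and $2v^2u$ omitted), together with the finite-energy boundary conditions $u=u_0r^k(1+o(1))$, $v=v_0r^k(1+o(1))$ as $r\to0$ for some $k>-\tfrac12$, and exponential decay of $u,v$ (like $e^{-\sqrt\gamma\, r}$ up to powers of $r$) as $r\to\infty$. Then $-2n<m<0$.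
   Context: The Nielsen–Olesen vortex profile $(s,z)$ with winding number $n$ consists of real functions on $(0,\infty)$ solving $s''+\frac{s'}{r}-[z^2+\frac{\beta}{2}(s^2-1)]s=0$ and $z''+\frac{z'}{r}-\frac{z}{r^2}-zs^2=0$, with $s=s_0r^n(1+o(1))$, $z=\frac nr+z_0r+o(r)$ as $r\to0$ and $s\to1$, $z\to0$ exponentially as $r\to\infty$. The given $x,y$ are the values of the auxiliary gauge fields for this embedded ($Z_{NO}$) vortex with vanishing electromagnetic potential; $u,v$ are the radial and azimuthal profiles of a $W$ field $\propto[u\,\mathbf e_r+iv\,\mathbf e_\varphi]e^{im\varphi}$ in the gauge where the Higgs doublet has vanishing upper component. $\beta=(M_H/M_Z)^2$, $\gamma=\cos^2\theta_{\rm w}$. *)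

theory Defs
  imports "HOL-Analysis.Analysis"
begin

text \<open>Nielsen--Olesen vortex profile (s,z) with winding number n, Higgs parameter beta,
  as real functions on (0,infinity) (values at r \<le> 0 are irrelevant).\<close>
definition NO_vortex :: "int \<Rightarrow> real \<Rightarrow> (real \<Rightarrow> real) \<Rightarrow> (real \<Rightarrow> real) \<Rightarrow> bool" where
  "NO_vortex n \<beta> s z \<longleftrightarrow>
     (\<forall>r>0. s differentiable (at r) \<and> deriv s differentiable (at r) \<and>
            z differentiable (at r) \<and> deriv z differentiable (at r)) \<and>
     (\<forall>r>0. deriv (deriv s) r + deriv s r / r
              - ((z r)\<^sup>2 + \<beta> / 2 * ((s r)\<^sup>2 - 1)) * s r = 0) \<and>
     (\<forall>r>0. deriv (deriv z) r + deriv z r / r - z r / r\<^sup>2 - z r * (s r)\<^sup>2 = 0) \<and>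
     (\<exists>s0 e. (e \<longlongrightarrow> 0) (at_right 0) \<and>
            (\<forall>r>0. s r = s0 * r ^ nat n * (1 + e r))) \<and>
     (\<exists>z0 e. (e \<longlongrightarrow> 0) (at_right 0) \<and>
            (\<forall>r>0. z r = of_int n / r + z0 * r + r * e r)) \<and>
     (\<exists>C a. a > 0 \<and> (\<forall>\<^sub>F r in at_top. \<bar>s r - 1\<bar> \<le> C * exp (- a * r) \<and>
                                          \<bar>z r\<bar> \<le> C * exp (- a * r)))"

definition W_eqs :: "bool \<Rightarrow> real \<Rightarrow> (real \<Rightarrow> real) \<Rightarrow> (real \<Rightarrow> real) \<Rightarrow>
                     (real \<Rightarrow> real) \<Rightarrow> (real \<Rightarrow> real) \<Rightarrow> bool" where
  "W_eqs nl \<gamma> s y u v \<longleftrightarrow>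
     (\<forall>r>0. u differentiable (at r) \<and> v differentiable (at r) \<and> deriv v differentiable (at r)) \<and>
     (\<forall>r>0. deriv (deriv v) r + deriv v r / r - v r / r\<^sup>2
              + 2 * (2 * deriv y r * u r + y r * deriv u r + y r * u r / r)
              - (if nl then 4 * v r * (u r)\<^sup>2 else 0)
              - \<gamma> * v r * (s r)\<^sup>2 = 0) \<and>
     (\<forall>r>0. deriv v r * y r - v r * deriv y r
              + (2 * (y r)\<^sup>2 + \<gamma> / 2 * (s r)\<^sup>2 + (if nl then 2 * (v r)\<^sup>2 else 0)) * u r = 0)"

definition W_bc :: "real \<Rightarrow> (real \<Rightarrow> real) \<Rightarrow> (real \<Rightarrow> real) \<Rightarrow> bool" where
  "W_bc \<gamma> u v \<longleftrightarrow>
     (\<exists>k u0 v0 eu ev. k > - 1/2 \<and> (eu \<longlongrightarrow> 0) (at_right 0) \<and> (ev \<longlongrightarrow> 0) (at_right 0) \<and>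
        (\<forall>r>0. u r = u0 * r powr k * (1 + eu r) \<and> v r = v0 * r powr k * (1 + ev r))) \<and>
     (\<exists>C p. \<forall>\<^sub>F r in at_top. \<bar>u r\<bar> \<le> C * r powr p * exp (- sqrt \<gamma> * r) \<and>
                              \<bar>v r\<bar> \<le> C * r powr p * exp (- sqrt \<gamma> * r))"

end

theory Submission
  imports Defs "HOL-Real_Asymp.Real_Asymp"
begin

text \<open>
  With \<open>a = r z\<close>, the gauge equation becomes \<open>a'' = a'/r + s\<^sup>2 a\<close>, and a maximum-principle argument
  gives \<open>0 < a < n\<close>. Writing \<open>x = y - z\<close>, one has \<open>r y = \<gamma> a - (2\<gamma>n + m)/2\<close> and
  \<open>r x = (\<gamma> - 1) a - (2\<gamma>n + m)/2\<close>, so \<open>x y \<ge> 0\<close> whenever \<open>m \<ge> 0\<close> or \<open>m \<le> -2n\<close>.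
  Under that sign condition the flux \<open>B = r (v' + 2yu) v - r y' v\<^sup>2/y\<close> has a derivative that is a
  sum of squares weighted by \<open>x y\<close>, hence is nondecreasing. The boundary conditions force \<open>B\<close> to
  vanish at both ends (in the nonlinear case with \<open>m = 0\<close> and \<open>k \<le> 0\<close>, \<open>B\<close> instead grows too
  fast near \<open>0\<close> to stay bounded below), so \<open>B \<equiv> 0\<close>, its derivative vanishes, and then
  \<open>u = v = 0\<close> near the origin, which kills the leading coefficients \<open>u\<^sub>0, v\<^sub>0\<close>.
\<close>

section \<open>Real analysis\<close>

lemma continuous_first_reach:
  fixes f :: "real \<Rightarrow> real"
  assumes "c \<le> d" and cont: "continuous_on {c..d} f" and "f c < L" and "L \<le> f d"
  obtains T where "c < T" "T \<le> d" "f T = L" "\<And>t. c \<le> t \<Longrightarrow> t < T \<Longrightarrow> f t < L"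
proof -
  define S where "S = {c..d} \<inter> f -` {L..}"
  have "closed S" unfolding S_def by (rule continuous_closed_preimage[OF cont]) auto
  moreover have "S \<noteq> {}" "bdd_below S" using assms unfolding S_def by (auto intro: bdd_belowI[of _ c])
  ultimately have T_in: "Inf S \<in> S" using closed_contains_Inf by blast
  have below: "f t < L" if "c \<le> t" "t < Inf S" for t
    using that cInf_lower[OF _ \<open>bdd_below S\<close>, of t] T_in unfolding S_def by force
  have "f (Inf S) = L"
  proof (rule ccontr)
    assume "f (Inf S) \<noteq> L"
    moreover have "continuous_on {c..Inf S} f" by (rule continuous_on_subset[OF cont]) (use T_in S_def in auto)
    ultimately obtain t where "c \<le> t" "t \<le> Inf S" "f t = L"
      using IVT'[of f c L "Inf S"] T_in assms unfolding S_def by auto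
    then show False using below[of t] \<open>f (Inf S) \<noteq> L\<close> by force
  qed
  moreover have "c \<noteq> Inf S" using \<open>f c < L\<close> T_in unfolding S_def by auto
  ultimately show thesis using that[of "Inf S"] T_in below unfolding S_def by force
qed

lemma continuous_attains_max_on_pos_reals:
  fixes f :: "real \<Rightarrow> real"
  assumes cont: "continuous_on {0<..} f" and "(f \<longlongrightarrow> L\<^sub>0) (at_right 0)" and "(f \<longlongrightarrow> L\<^sub>1) at_top"
    and "r\<^sub>1 > 0" and "f r\<^sub>1 > max L\<^sub>0 L\<^sub>1"
  obtains r\<^sub>0 where "r\<^sub>0 > 0" "\<And>r. r > 0 \<Longrightarrow> f r \<le> f r\<^sub>0"
proof -
  obtain b where b: "b > 0" "\<And>r. 0 < r \<Longrightarrow> r < b \<Longrightarrow> f r < f r\<^sub>1"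
    using order_tendstoD(2)[OF assms(2), of "f r\<^sub>1"] assms(5)
    unfolding eventually_at_right_field by auto
  obtain N where N: "\<And>r. r \<ge> N \<Longrightarrow> f r < f r\<^sub>1"
    using order_tendstoD(2)[OF assms(3), of "f r\<^sub>1"] assms(5)
    unfolding eventually_at_top_linorder by auto
  define S where "S = {min (b/2) r\<^sub>1 .. max N r\<^sub>1}"
  have "0 < min (b/2) r\<^sub>1" using b assms(4) by auto
  then have "continuous_on S f" unfolding S_def by (intro continuous_on_subset[OF cont]) auto
  moreover have "compact S" "S \<noteq> {}" unfolding S_def by auto
  ultimately obtain r\<^sub>0 where r\<^sub>0: "r\<^sub>0 \<in> S" "\<And>r. r \<in> S \<Longrightarrow> f r \<le> f r\<^sub>0"
    using continuous_attains_sup[of S f] by auto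
  have "f r \<le> f r\<^sub>0" if "r > 0" for r
  proof (cases "r \<in> S")
    case False
    then have "f r < f r\<^sub>1" using b N that unfolding S_def by (auto simp: min_def max_def split: if_splits)
    then show ?thesis using r\<^sub>0(2)[of r\<^sub>1] unfolding S_def by auto
  qed (use r\<^sub>0 in auto)
  moreover have "r\<^sub>0 > 0" using r\<^sub>0(1) \<open>0 < min (b/2) r\<^sub>1\<close> unfolding S_def by auto
  ultimately show thesis using that by blast
qed

lemma continuous_attains_min_on_pos_reals:
  fixes f :: "real \<Rightarrow> real"
  assumes "continuous_on {0<..} f" and "(f \<longlongrightarrow> L\<^sub>0) (at_right 0)" and "(f \<longlongrightarrow> L\<^sub>1) at_top"
    and "r\<^sub>1 > 0" and "f r\<^sub>1 < min L\<^sub>0 L\<^sub>1"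
  obtains r\<^sub>0 where "r\<^sub>0 > 0" "\<And>r. r > 0 \<Longrightarrow> f r\<^sub>0 \<le> f r"
proof -
  obtain r\<^sub>0 where "r\<^sub>0 > 0" "\<And>r. r > 0 \<Longrightarrow> - f r \<le> - f r\<^sub>0"
    by (rule continuous_attains_max_on_pos_reals[of "\<lambda>x. - f x" "- L\<^sub>0" "- L\<^sub>1" r\<^sub>1])
       (use assms in \<open>auto intro!: continuous_intros tendsto_intros\<close>)
  then show thesis using that by auto
qed

text \<open>Energy estimate: \<open>(f\<^sup>2 + f'\<^sup>2) exp (M t)\<close> is nondecreasing, so it vanishes to the left of \<open>d\<close>.\<close>
lemma second_order_vanishing_backward:
  fixes f f' f'' :: "real \<Rightarrow> real"
  assumes "c \<le> d"
    and f: "\<And>t. t \<in> {c..d} \<Longrightarrow> (f has_real_derivative f' t) (at t)"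
    and f': "\<And>t. t \<in> {c..d} \<Longrightarrow> (f' has_real_derivative f'' t) (at t)"
    and bound: "\<And>t. t \<in> {c..d} \<Longrightarrow> \<bar>f'' t\<bar> \<le> L * (\<bar>f t\<bar> + \<bar>f' t\<bar>)"
    and "f d = 0" "f' d = 0"
  shows "f c = 0"
proof -
  define M where "M = 1 + 3 * \<bar>L\<bar>"
  define E where "E t = (f t)\<^sup>2 + (f' t)\<^sup>2" for t
  define E' where "E' t = (2 * f t * f' t + 2 * f' t * f'' t + M * E t) * exp (M * t)" for t
  have "E c * exp (M * c) \<le> E d * exp (M * d)"
  proof (rule deriv_nonneg_imp_mono[where g = "\<lambda>t. E t * exp (M * t)" and g' = E'])
    fix t assume t: "t \<in> {c..d}"
    show "((\<lambda>t. E t * exp (M * t)) has_real_derivative E' t) (at t)"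
      unfolding E_def E'_def
      by (auto intro!: derivative_eq_intros f[OF t] f'[OF t] simp: power2_eq_square algebra_simps)
    have ff': "2 * (\<bar>f t\<bar> * \<bar>f' t\<bar>) \<le> E t"
      using zero_le_square[of "\<bar>f t\<bar> - \<bar>f' t\<bar>"] unfolding E_def
      by (simp add: power2_eq_square algebra_simps abs_mult_self_eq)
    have "\<bar>f'' t\<bar> \<le> \<bar>L\<bar> * (\<bar>f t\<bar> + \<bar>f' t\<bar>)"
      using order_trans[OF bound[OF t] mult_right_mono[OF abs_ge_self]] by simp
    then have "\<bar>f' t\<bar> * \<bar>f'' t\<bar> \<le> \<bar>f' t\<bar> * (\<bar>L\<bar> * (\<bar>f t\<bar> + \<bar>f' t\<bar>))"
      by (rule mult_left_mono) simp
    also have "\<dots> = \<bar>L\<bar> * (\<bar>f t\<bar> * \<bar>f' t\<bar> + \<bar>f' t\<bar> * \<bar>f' t\<bar>)" by (simp add: algebra_simps)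
    also have "\<dots> \<le> \<bar>L\<bar> * (3/2 * E t)"
    proof (rule mult_left_mono)
      have "\<bar>f' t\<bar> * \<bar>f' t\<bar> \<le> E t" unfolding E_def abs_mult_self_eq by (simp add: power2_eq_square)
      with ff' show "\<bar>f t\<bar> * \<bar>f' t\<bar> + \<bar>f' t\<bar> * \<bar>f' t\<bar> \<le> 3/2 * E t" by linarith
    qed simp
    finally have "- (f' t * f'' t) \<le> \<bar>L\<bar> * (3/2 * E t)"
      using abs_ge_minus_self[of "f' t * f'' t"] unfolding abs_mult by linarith
    moreover have "- (f t * f' t) \<le> E t / 2"
      using ff' abs_ge_minus_self[of "f t * f' t"] unfolding abs_mult by linarith
    moreover have "M * E t = E t + 2 * (\<bar>L\<bar> * (3/2 * E t))" unfolding M_def by (simp add: algebra_simps)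
    ultimately have "- (2 * f t * f' t + 2 * f' t * f'' t) \<le> M * E t" by linarith
    then show "E' t \<ge> 0" unfolding E'_def by simp
  qed (rule \<open>c \<le> d\<close>)
  then have "E c \<le> 0" using \<open>f d = 0\<close> \<open>f' d = 0\<close> unfolding E_def by (simp add: mult_le_0_iff)
  then show ?thesis unfolding E_def by (simp add: sum_power2_le_zero_iff)
qed

lemma coefficient_eq_0_if_vanishing_at_right_0:
  fixes c :: real and g e :: "real \<Rightarrow> real"
  assumes "(e \<longlongrightarrow> 0) (at_right 0)"
    and "\<forall>\<^sub>F r in at_right 0. g r \<noteq> 0 \<and> c * g r * (1 + e r) = 0"
  shows "c = 0"
proof -
  have "\<forall>\<^sub>F r in at_right 0. e r > - 1" using order_tendstoD(1)[OF assms(1)] by simp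
  then have "\<forall>\<^sub>F r in at_right 0. e r > - 1 \<and> g r \<noteq> 0 \<and> c * g r * (1 + e r) = 0"
    using assms(2) by eventually_elim auto
  then obtain r where "e r > - 1" "g r \<noteq> 0" "c * g r * (1 + e r) = 0"
    using eventually_happens'[OF trivial_limit_at_right_real] by blast
  then show ?thesis by simp
qed

lemma powr_primitive_has_derivative:
  fixes p t :: real
  assumes "t > 0"
  shows "((\<lambda>t. if p = 0 then ln t else t powr p / p) has_real_derivative t powr p / t) (at t)"
proof (cases "p = 0")
  case True
  have "(ln has_real_derivative 1 / t) (at t)" using assms by (auto intro!: derivative_eq_intros)
  then show ?thesis using True assms by simp
next
  case False
  have "((\<lambda>t. t powr p / p) has_real_derivative p * t powr (p - 1) / p) (at t)"
    using assms by (auto intro!: derivative_eq_intros)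
  then show ?thesis using False assms by (simp add: powr_diff)
qed

text \<open>\<open>B - c P\<close>, with \<open>P\<close> a primitive of \<open>t powr (6 k) / t\<close>, is nondecreasing, so near \<open>0\<close>
  \<open>B \<le> const + c P\<close>, which tends to \<open>-\<infinity>\<close> faster than \<open>- C t powr (4 k)\<close>.\<close>
lemma steep_growth_contradicts_powr_lower_bound:
  fixes B B' :: "real \<Rightarrow> real" and k c C :: real
  assumes "k \<le> 0" and "c > 0"
    and growth: "\<forall>\<^sub>F t in at_right 0.
                   (B has_real_derivative B' t) (at t) \<and> c * t powr (6 * k) / t \<le> B' t"
    and lower: "\<forall>\<^sub>F t in at_right 0. - C * t powr (4 * k) \<le> B t"
  shows False
proof -
  obtain d where "d > 0" and d: "\<And>t. 0 < t \<Longrightarrow> t < d \<Longrightarrow>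
      (B has_real_derivative B' t) (at t) \<and> c * t powr (6 * k) / t \<le> B' t \<and> - C * t powr (4 * k) \<le> B t"
    using eventually_conj[OF growth lower] unfolding eventually_at_right_field by auto
  define P where "P t = (if 6 * k = 0 then ln t else t powr (6 * k) / (6 * k))" for t
  have P: "(P has_real_derivative t powr (6 * k) / t) (at t)" if "t > 0" for t
    unfolding P_def[abs_def] by (rule powr_primitive_has_derivative[OF that])
  define b where "b = d / 2"
  define K where "K = B b - c * P b"
  have upper: "B r \<le> K + c * P r" if "0 < r" "r \<le> b" for r
  proof -
    have "B r - c * P r \<le> B b - c * P b"
    proof (rule deriv_nonneg_imp_mono[where g = "\<lambda>t. B t - c * P t" and g' = "\<lambda>t. B' t - c * (t powr (6 * k) / t)"])
      fix t assume "t \<in> {r..b}"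
      then have t: "0 < t" "t < d" using that \<open>d > 0\<close> by (auto simp: b_def)
      show "((\<lambda>t. B t - c * P t) has_real_derivative B' t - c * (t powr (6 * k) / t)) (at t)"
        using d[OF t] by (intro DERIV_diff DERIV_cmult P[OF t(1)]) auto
      show "0 \<le> B' t - c * (t powr (6 * k) / t)" using d[OF t] by simp
    qed (use that in simp)
    then show ?thesis unfolding K_def by simp
  qed
  have diverges: "filterlim (\<lambda>r. - c * P r - C * r powr (4 * k) - K) at_top (at_right 0)"
  proof (cases "k = 0")
    case True
    have lim: "filterlim (\<lambda>r. - c * ln r - C - K) at_top (at_right 0)" using \<open>c > 0\<close> by real_asymp
    have eq: "\<forall>\<^sub>F r in at_right 0. - c * ln r - C - K = - c * P r - C * r powr (4 * k) - K"
      unfolding eventually_at_right_field P_def using True by (auto intro!: exI[of _ 1])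
    show ?thesis by (rule filterlim_cong[OF refl refl eq, THEN iffD1, OF lim])
  next
    case False
    define c' where "c' = c / (- 6 * k)"
    have "k < 0" "c' > 0" using False \<open>k \<le> 0\<close> \<open>c > 0\<close> by (auto simp: c'_def divide_pos_neg)
    then have "filterlim (\<lambda>r. c' * r powr (6 * k) - C * r powr (4 * k) - K) at_top (at_right 0)"
      by real_asymp
    moreover have "c' * r powr (6 * k) = - c * P r" for r
      unfolding c'_def P_def using False by (simp add: field_simps)
    ultimately show ?thesis by simp
  qed
  have "\<forall>\<^sub>F r in at_right 0. 0 < - c * P r - C * r powr (4 * k) - K"
    using diverges[unfolded filterlim_at_top_dense, rule_format, of 0] .
  moreover have "\<forall>\<^sub>F r in at_right 0. 0 < r \<and> r < b"
    unfolding eventually_at_right_field using \<open>d > 0\<close> by (auto simp: b_def intro!: exI[of _ b])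
  ultimately have "\<forall>\<^sub>F r in at_right 0. 0 < - c * P r - C * r powr (4 * k) - K \<and> 0 < r \<and> r < b"
    by (rule eventually_conj)
  then obtain r where "0 < - c * P r - C * r powr (4 * k) - K" "0 < r" "r < b"
    using eventually_happens'[OF trivial_limit_at_right_real] by blast
  then show False using upper[of r] d[of r] by (auto simp: b_def)
qed

text \<open>The left-hand side is the derivative of \<open>r (v' + 2 y u) v - r y' v\<^sup>2 / y\<close> by the product
  and quotient rules.\<close>
lemma flux_derivative_identity:
  fixes r u u' v v' v'' y y' y'' s z \<gamma> c :: real
  assumes "r > 0" and "y \<noteq> 0"
    and v_eq: "v'' + v'/r - v/r\<^sup>2 + 2 * (2 * y' * u + y * u' + y * u/r) - 2 * c * v * u\<^sup>2 - \<gamma> * v * s\<^sup>2 = 0"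
    and u_eq: "v' * y - v * y' + (2 * y\<^sup>2 + \<gamma>/2 * s\<^sup>2 + c * v\<^sup>2) * u = 0"
    and y_eq: "y'' + y'/r - y/r\<^sup>2 = \<gamma> * z * s\<^sup>2"
  shows "(v' + 2 * y * u) * v + r * (v'' + 2 * (y' * u + y * u')) * v + r * (v' + 2 * y * u) * v'
     - (y' * v\<^sup>2/y + r * y'' * v\<^sup>2/y + r * y' * (2 * v * v')/y - r * y' * v\<^sup>2 * y'/y\<^sup>2)
   = \<gamma> * r * s\<^sup>2 * v\<^sup>2 * ((y - z) * y) / y\<^sup>2
     + r * u\<^sup>2 * ((2 * y\<^sup>2 + \<gamma>/2 * s\<^sup>2 + c * v\<^sup>2)\<^sup>2 - 2 * (2 * y\<^sup>2 + \<gamma>/2 * s\<^sup>2) * y\<^sup>2) / y\<^sup>2"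
proof -
  have "v'' = - v'/r + v/r\<^sup>2 - 2 * (2 * y' * u + y * u' + y * u/r) + 2 * c * v * u\<^sup>2 + \<gamma> * v * s\<^sup>2"
    using v_eq by linarith
  moreover have "y'' = \<gamma> * z * s\<^sup>2 - y'/r + y/r\<^sup>2" using y_eq by linarith
  moreover have "v' = (v * y' - (2 * y\<^sup>2 + \<gamma>/2 * s\<^sup>2 + c * v\<^sup>2) * u) / y"
    using u_eq \<open>y \<noteq> 0\<close> by (simp add: field_simps)
  ultimately show ?thesis using \<open>r > 0\<close> \<open>y \<noteq> 0\<close>
    by (simp only:) (simp add: field_simps power2_eq_square)
qed

section \<open>The gauge profile of the vortex\<close>

locale NO_profile =
  fixes n :: int and s z :: "real \<Rightarrow> real"
    and s0 z0 :: real and es ez :: "real \<Rightarrow> real" and C \<mu> :: real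
  assumes n_ge_1: "n \<ge> 1"
    and s_differentiable: "\<And>r. r > 0 \<Longrightarrow> s differentiable (at r)"
    and z_differentiable: "\<And>r. r > 0 \<Longrightarrow> z differentiable (at r)"
    and z'_differentiable: "\<And>r. r > 0 \<Longrightarrow> deriv z differentiable (at r)"
    and z_ode: "\<And>r. r > 0 \<Longrightarrow> deriv (deriv z) r + deriv z r / r - z r / r\<^sup>2 - z r * (s r)\<^sup>2 = 0"
    and es_tendsto: "(es \<longlongrightarrow> 0) (at_right 0)"
    and s_near_0: "\<And>r. r > 0 \<Longrightarrow> s r = s0 * r ^ nat n * (1 + es r)"
    and ez_tendsto: "(ez \<longlongrightarrow> 0) (at_right 0)"
    and z_near_0: "\<And>r. r > 0 \<Longrightarrow> z r = of_int n / r + z0 * r + r * ez r"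
    and \<mu>_pos: "\<mu> > 0"
    and decay: "\<forall>\<^sub>F r in at_top. \<bar>s r - 1\<bar> \<le> C * exp (- \<mu> * r) \<and> \<bar>z r\<bar> \<le> C * exp (- \<mu> * r)"
begin

definition "a r = r * z r"
definition "a' r = z r + r * deriv z r"

lemma z_has_derivative: "r > 0 \<Longrightarrow> (z has_real_derivative deriv z r) (at r)"
  using z_differentiable DERIV_deriv_iff_real_differentiable by blast

lemma z'_has_derivative: "r > 0 \<Longrightarrow> (deriv z has_real_derivative deriv (deriv z) r) (at r)"
  using z'_differentiable DERIV_deriv_iff_real_differentiable by blast

lemma z''_eq: "r > 0 \<Longrightarrow> deriv (deriv z) r = z r * (s r)\<^sup>2 - deriv z r / r + z r / r\<^sup>2"
  using z_ode[of r] by linarith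

lemma s_continuous_on: "continuous_on {0<..} s"
  using s_differentiable
  by (intro continuous_at_imp_continuous_on) (auto intro: differentiable_imp_continuous_within)

lemma a_has_derivative: "r > 0 \<Longrightarrow> (a has_real_derivative a' r) (at r)"
  unfolding a_def[abs_def] a'_def by (auto intro!: derivative_eq_intros z_has_derivative)

lemma a'_has_derivative:
  assumes "r > 0" shows "(a' has_real_derivative a' r / r + (s r)\<^sup>2 * a r) (at r)"
proof -
  have "(a' has_real_derivative deriv z r + (deriv z r + r * deriv (deriv z) r)) (at r)"
    unfolding a'_def[abs_def] using assms
    by (auto intro!: derivative_eq_intros z_has_derivative z'_has_derivative)
  moreover have "deriv z r + (deriv z r + r * deriv (deriv z) r) = a' r / r + (s r)\<^sup>2 * a r"
    unfolding a'_def a_def z''_eq[OF assms] using assms by (simp add: field_simps power2_eq_square)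
  ultimately show ?thesis by simp
qed

lemma a_continuous_on: "continuous_on {0<..} a"
  using a_has_derivative by (meson DERIV_isCont continuous_at_imp_continuous_on greaterThan_iff)

lemma a_near_0: "r > 0 \<Longrightarrow> a r = of_int n + r\<^sup>2 * (z0 + ez r)"
  unfolding a_def using z_near_0 by (simp add: field_simps power2_eq_square)

lemma a_tendsto_0: "(a \<longlongrightarrow> of_int n) (at_right 0)"
proof -
  have "((\<lambda>r. of_int n + r\<^sup>2 * (z0 + ez r)) \<longlongrightarrow> of_int n + 0\<^sup>2 * (z0 + 0)) (at_right 0)"
    by (intro tendsto_intros ez_tendsto)
  moreover have "\<forall>\<^sub>F r in at_right 0. of_int n + r\<^sup>2 * (z0 + ez r) = a r"
    using a_near_0 by (auto simp: eventually_at_right_field intro!: exI[of _ 1])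
  ultimately show ?thesis by (simp add: tendsto_cong)
qed

lemma a_tendsto_top: "(a \<longlongrightarrow> 0) at_top"
proof (rule Lim_null_comparison)
  show "\<forall>\<^sub>F r in at_top. norm (a r) \<le> r * (C * exp (- \<mu> * r))"
    using decay eventually_gt_at_top[of 0]
    by eventually_elim (auto simp: a_def abs_mult intro: mult_left_mono)
  show "((\<lambda>r. r * (C * exp (- \<mu> * r))) \<longlongrightarrow> 0) at_top" using \<mu>_pos by real_asymp
qed

definition "g r = a' r / r"

lemma g_has_derivative:
  assumes "r > 0" shows "(g has_real_derivative (s r)\<^sup>2 * a r / r) (at r)"
proof -
  have "(g has_real_derivative ((a' r / r + (s r)\<^sup>2 * a r) * r - a' r) / (r * r)) (at r)"
    unfolding g_def[abs_def] using assms
    by (auto intro!: derivative_eq_intros a'_has_derivative)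
  then show ?thesis using assms by (simp add: field_simps power2_eq_square)
qed

lemma a'_eq_r_g: "r > 0 \<Longrightarrow> a' r = r * g r"
  unfolding g_def by simp

lemma a'_eq_0_at_min: "r\<^sub>0 > 0 \<Longrightarrow> (\<And>r. r > 0 \<Longrightarrow> a r\<^sub>0 \<le> a r) \<Longrightarrow> a' r\<^sub>0 = 0"
  by (rule DERIV_local_min[OF a_has_derivative, of _ r\<^sub>0]) auto

lemma a'_eq_0_at_max: "r\<^sub>0 > 0 \<Longrightarrow> (\<And>r. r > 0 \<Longrightarrow> a r \<le> a r\<^sub>0) \<Longrightarrow> a' r\<^sub>0 = 0"
  by (rule DERIV_local_max[OF a_has_derivative, of _ r\<^sub>0]) auto

text \<open>While \<open>a\<close> is negative, \<open>g\<close> decreases, so \<open>a\<close> cannot climb back up from a negative minimum.\<close>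
lemma a_nonneg:
  assumes "r\<^sub>1 > 0" shows "a r\<^sub>1 \<ge> 0"
proof (rule ccontr)
  assume "\<not> a r\<^sub>1 \<ge> 0"
  then have "a r\<^sub>1 < min (of_int n) 0" using n_ge_1 by simp
  then obtain r\<^sub>0 where "r\<^sub>0 > 0" and min: "\<And>r. r > 0 \<Longrightarrow> a r\<^sub>0 \<le> a r"
    using continuous_attains_min_on_pos_reals[OF a_continuous_on a_tendsto_0 a_tendsto_top \<open>r\<^sub>1 > 0\<close>]
    by blast
  define M where "M = a r\<^sub>0"
  have "M < 0" using min[OF \<open>r\<^sub>1 > 0\<close>] \<open>\<not> a r\<^sub>1 \<ge> 0\<close> unfolding M_def by simp
  have "g r\<^sub>0 = 0" using a'_eq_0_at_min[OF \<open>r\<^sub>0 > 0\<close> min] unfolding g_def by simp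
  obtain R where R: "\<And>r. r \<ge> R \<Longrightarrow> a r > M / 2"
    using order_tendstoD(1)[OF a_tendsto_top, of "M / 2"] \<open>M < 0\<close>
    unfolding eventually_at_top_linorder by auto
  define R' where "R' = max R (r\<^sub>0 + 1)"
  have "continuous_on {r\<^sub>0..R'} a"
    by (rule continuous_on_subset[OF a_continuous_on]) (use \<open>r\<^sub>0 > 0\<close> in auto)
  moreover have "r\<^sub>0 \<le> R'" "a r\<^sub>0 < M / 2" "M / 2 \<le> a R'"
    using R[of R'] \<open>M < 0\<close> unfolding M_def R'_def by auto
  ultimately obtain T where "r\<^sub>0 < T" "T \<le> R'" "a T = M / 2"
    and below: "\<And>t. r\<^sub>0 \<le> t \<Longrightarrow> t < T \<Longrightarrow> a t < M / 2"
    using continuous_first_reach by metis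
  have a_nonpos: "a t \<le> 0" if "r\<^sub>0 \<le> t" "t \<le> T" for t
    using below[of t] \<open>a T = M / 2\<close> \<open>M < 0\<close> that by (cases "t < T") auto
  have g_nonpos: "g t \<le> 0" if "r\<^sub>0 \<le> t" "t \<le> T" for t
  proof -
    have "g t \<le> g r\<^sub>0"
    proof (rule deriv_nonpos_imp_antimono[OF g_has_derivative])
      fix x assume "x \<in> {r\<^sub>0..t}"
      then show "0 < x" "(s x)\<^sup>2 * a x / x \<le> 0"
        using that \<open>r\<^sub>0 > 0\<close> a_nonpos[of x] by (auto intro!: divide_nonpos_pos mult_nonneg_nonpos)
    qed (rule that(1))
    then show ?thesis using \<open>g r\<^sub>0 = 0\<close> by simp
  qed
  have "a T \<le> a r\<^sub>0"
  proof (rule deriv_nonpos_imp_antimono[OF a_has_derivative])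
    fix x assume "x \<in> {r\<^sub>0..T}"
    then show "0 < x" "a' x \<le> 0"
      using \<open>r\<^sub>0 > 0\<close> g_nonpos[of x] a'_eq_r_g[of x] by (auto simp: mult_nonneg_nonpos)
  qed (use \<open>r\<^sub>0 < T\<close> in simp)
  then show False using \<open>a T = M / 2\<close> \<open>M < 0\<close> unfolding M_def by simp
qed

lemma g_mono: "0 < p \<Longrightarrow> p \<le> q \<Longrightarrow> g p \<le> g q"
  by (rule deriv_nonneg_imp_mono[OF g_has_derivative]) (auto intro!: divide_nonneg_pos mult_nonneg_nonneg a_nonneg)

lemma a_max_nonpos:
  assumes "r\<^sub>0 > 0" and max: "\<And>r. r > 0 \<Longrightarrow> a r \<le> a r\<^sub>0" shows "a r\<^sub>0 \<le> 0"
proof (rule ccontr)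
  assume "\<not> a r\<^sub>0 \<le> 0"
  have "g r\<^sub>0 = 0" using a'_eq_0_at_max[OF assms] unfolding g_def by simp
  have grows: "a r\<^sub>0 \<le> a t" if "r\<^sub>0 \<le> t" for t
  proof (rule deriv_nonneg_imp_mono[OF a_has_derivative])
    fix x assume "x \<in> {r\<^sub>0..t}"
    then show "0 < x" "0 \<le> a' x"
      using \<open>r\<^sub>0 > 0\<close> g_mono[of r\<^sub>0 x] \<open>g r\<^sub>0 = 0\<close> a'_eq_r_g[of x] by auto
  qed (rule that)
  obtain R where "\<And>r. r \<ge> R \<Longrightarrow> a r < a r\<^sub>0"
    using order_tendstoD(2)[OF a_tendsto_top, of "a r\<^sub>0"] \<open>\<not> a r\<^sub>0 \<le> 0\<close>
    unfolding eventually_at_top_linorder by auto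
  then have "a (max R r\<^sub>0) < a r\<^sub>0" by simp
  then show False using grows[OF max.cobounded2[of r\<^sub>0 R]] by linarith
qed

lemma a_less_n:
  assumes "r > 0" shows "a r < of_int n"
proof -
  have le: "a t \<le> of_int n" if "t > 0" for t
  proof (rule ccontr)
    assume "\<not> a t \<le> of_int n"
    then have "a t > max (of_int n) 0" using n_ge_1 by simp
    then obtain r\<^sub>0 where "r\<^sub>0 > 0" "\<And>r. r > 0 \<Longrightarrow> a r \<le> a r\<^sub>0"
      using continuous_attains_max_on_pos_reals[OF a_continuous_on a_tendsto_0 a_tendsto_top \<open>t > 0\<close>]
      by blast
    moreover from this have "a r\<^sub>0 \<le> 0" by (rule a_max_nonpos)
    ultimately show False using \<open>t > 0\<close> \<open>a t > max (of_int n) 0\<close> by force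
  qed
  show ?thesis
  proof (rule ccontr)
    assume "\<not> a r < of_int n"
    then have "\<And>t. t > 0 \<Longrightarrow> a t \<le> a r" using le[OF assms] le by simp
    then have "a r \<le> 0" by (rule a_max_nonpos[OF assms])
    then show False using \<open>\<not> a r < of_int n\<close> n_ge_1 by simp
  qed
qed

text \<open>A double zero of \<open>a\<close> would propagate backwards through the linear equation for \<open>a\<close>.\<close>
lemma a_pos:
  assumes "r\<^sub>0 > 0" shows "a r\<^sub>0 > 0"
proof (rule ccontr)
  assume "\<not> a r\<^sub>0 > 0"
  then have "a r\<^sub>0 = 0" using a_nonneg[OF assms] by simp
  then have "a' r\<^sub>0 = 0" using a'_eq_0_at_min[OF assms] a_nonneg by simp
  have vanish: "a c = 0" if "0 < c" "c < r\<^sub>0" for c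
  proof -
    have "continuous_on {c..r\<^sub>0} (\<lambda>t. (s t)\<^sup>2)"
      using that by (intro continuous_intros continuous_on_subset[OF s_continuous_on]) auto
    then obtain S where S: "\<And>t. t \<in> {c..r\<^sub>0} \<Longrightarrow> (s t)\<^sup>2 \<le> S"
      using continuous_attains_sup[of "{c..r\<^sub>0}" "\<lambda>t. (s t)\<^sup>2"] that by fastforce
    show ?thesis
    proof (rule second_order_vanishing_backward[of c r\<^sub>0 a a' _ "1 / c + S"])
      fix t assume t: "t \<in> {c..r\<^sub>0}"
      then have "t > 0" using that by auto
      show "(a has_real_derivative a' t) (at t)" by (rule a_has_derivative[OF \<open>t > 0\<close>])
      show "(a' has_real_derivative a' t / t + (s t)\<^sup>2 * a t) (at t)" by (rule a'_has_derivative[OF \<open>t > 0\<close>])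
      have "0 \<le> S" using S[OF t] by (smt (verit) zero_le_power2)
      have "\<bar>a' t / t + (s t)\<^sup>2 * a t\<bar> \<le> \<bar>a' t\<bar> / t + (s t)\<^sup>2 * \<bar>a t\<bar>"
        using \<open>t > 0\<close> abs_triangle_ineq[of "a' t / t" "(s t)\<^sup>2 * a t"] by (simp add: abs_mult)
      also have "\<dots> \<le> 1 / c * \<bar>a' t\<bar> + S * \<bar>a t\<bar>"
        using t that S[OF t] by (intro add_mono mult_right_mono) (auto simp: divide_left_mono)
      also have "\<dots> \<le> 1 / c * (\<bar>a t\<bar> + \<bar>a' t\<bar>) + S * (\<bar>a t\<bar> + \<bar>a' t\<bar>)"
        using that \<open>0 \<le> S\<close> by (intro add_mono mult_left_mono) auto
      finally show "\<bar>a' t / t + (s t)\<^sup>2 * a t\<bar> \<le> (1 / c + S) * (\<bar>a t\<bar> + \<bar>a' t\<bar>)"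
        by (simp add: algebra_simps)
    qed (use that \<open>a r\<^sub>0 = 0\<close> \<open>a' r\<^sub>0 = 0\<close> in auto)
  qed
  obtain b where "b > 0" and b: "\<And>r. 0 < r \<Longrightarrow> r < b \<Longrightarrow> a r > 0"
    using order_tendstoD(1)[OF a_tendsto_0, of 0] n_ge_1 unfolding eventually_at_right_field by auto
  define x where "x = min (b/2) (r\<^sub>0/2)"
  have "0 < x" "x < b" "x < r\<^sub>0" using \<open>b > 0\<close> assms unfolding x_def by auto
  then show False using b[of x] vanish[of x] by simp
qed

lemma g_negative_somewhere: "\<exists>r>0. g r < 0"
proof (rule ccontr)
  assume "\<not> (\<exists>r>0. g r < 0)"
  then have g_nonneg: "g r \<ge> 0" if "r > 0" for r using that by (meson not_le)
  have mono: "a p \<le> a q" if "0 < p" "p \<le> q" for p q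
  proof (rule deriv_nonneg_imp_mono[OF a_has_derivative])
    fix x assume "x \<in> {p..q}"
    then have "0 < x" using that by simp
    then show "0 < x" "0 \<le> a' x" using g_nonneg[of x] a'_eq_r_g[of x] by auto
  qed (rule that(2))
  obtain b where "b > 0" and b: "\<And>r. 0 < r \<Longrightarrow> r < b \<Longrightarrow> a r > of_int n / 2"
    using order_tendstoD(1)[OF a_tendsto_0, of "of_int n / 2"] n_ge_1
    unfolding eventually_at_right_field by auto
  obtain R where R: "\<And>r. r \<ge> R \<Longrightarrow> a r < of_int n / 2"
    using order_tendstoD(2)[OF a_tendsto_top, of "of_int n / 2"] n_ge_1
    unfolding eventually_at_top_linorder by auto
  have "a (b/2) \<le> a (max R b)" using mono \<open>b > 0\<close> by simp
  moreover have "a (b/2) > of_int n / 2" using b \<open>b > 0\<close> by simp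
  moreover have "a (max R b) < of_int n / 2" using R by simp
  ultimately show False by simp
qed

lemma z0_neg: "z0 < 0"
proof -
  obtain r\<^sub>1 where "r\<^sub>1 > 0" "g r\<^sub>1 < 0" using g_negative_somewhere by blast
  txt \<open>Below \<open>r\<^sub>1\<close>, \<open>a' \<le> r g(r\<^sub>1)\<close>, so \<open>a\<close> falls below \<open>n\<close> at least quadratically.\<close>
  have quadratic: "z0 + ez r \<le> g r\<^sub>1 / 2" if "0 < r" "r \<le> r\<^sub>1" for r
  proof -
    define \<phi> where "\<phi> t = a t - g r\<^sub>1 * t\<^sup>2 / 2" for t
    have antimono: "\<phi> r \<le> \<phi> t" if "0 < t" "t \<le> r" for t
    proof (rule deriv_nonpos_imp_antimono[where g = \<phi> and g' = "\<lambda>t. t * (g t - g r\<^sub>1)"])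
      fix x assume x: "x \<in> {t..r}"
      then have "x > 0" using that by auto
      show "(\<phi> has_real_derivative x * (g x - g r\<^sub>1)) (at x)"
        unfolding \<phi>_def[abs_def] using a'_eq_r_g[OF \<open>x > 0\<close>]
        by (auto intro!: derivative_eq_intros a_has_derivative[OF \<open>x > 0\<close>] simp: algebra_simps power2_eq_square)
      show "x * (g x - g r\<^sub>1) \<le> 0"
        using g_mono[OF \<open>x > 0\<close>, of r\<^sub>1] x \<open>x > 0\<close> \<open>r \<le> r\<^sub>1\<close> by (simp add: mult_nonneg_nonpos)
    qed (use that in simp)
    have "((\<lambda>t. a t - g r\<^sub>1 * t\<^sup>2 / 2) \<longlongrightarrow> of_int n - g r\<^sub>1 * 0\<^sup>2 / 2) (at_right 0)"
      by (intro tendsto_intros a_tendsto_0) simp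
    then have "(\<phi> \<longlongrightarrow> of_int n) (at_right 0)" unfolding \<phi>_def by simp
    moreover have "\<forall>\<^sub>F t in at_right 0. \<phi> r \<le> \<phi> t"
      unfolding eventually_at_right_field using antimono \<open>0 < r\<close> by (intro exI[of _ r]) auto
    ultimately have "\<phi> r \<le> of_int n" by (rule tendsto_lowerbound) simp
    then have "r\<^sup>2 * (z0 + ez r) \<le> r\<^sup>2 * (g r\<^sub>1 / 2)"
      unfolding \<phi>_def a_near_0[OF \<open>0 < r\<close>] by (simp add: algebra_simps)
    then show ?thesis using \<open>0 < r\<close> by simp
  qed
  have "((\<lambda>r. z0 + ez r) \<longlongrightarrow> z0 + 0) (at_right 0)" by (intro tendsto_intros ez_tendsto)
  moreover have "\<forall>\<^sub>F r in at_right 0. z0 + ez r \<le> g r\<^sub>1 / 2"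
    unfolding eventually_at_right_field using quadratic \<open>r\<^sub>1 > 0\<close> by (intro exI[of _ r\<^sub>1]) auto
  ultimately have "z0 + 0 \<le> g r\<^sub>1 / 2" by (rule tendsto_upperbound) simp
  then show ?thesis using \<open>g r\<^sub>1 < 0\<close> by simp
qed

lemma s_tendsto_top: "(s \<longlongrightarrow> 1) at_top"
proof -
  have "((\<lambda>r. s r - 1) \<longlongrightarrow> 0) at_top"
  proof (rule Lim_null_comparison)
    show "\<forall>\<^sub>F r in at_top. norm (s r - 1) \<le> C * exp (- \<mu> * r)"
      using decay by eventually_elim auto
    show "((\<lambda>r. C * exp (- \<mu> * r)) \<longlongrightarrow> 0) at_top" using \<mu>_pos by real_asymp
  qed
  then show ?thesis by (simp add: LIM_zero_cancel)
qed

lemma s_tendsto_0: "(s \<longlongrightarrow> 0) (at_right 0)"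
proof -
  have "((\<lambda>r. s0 * r ^ nat n * (1 + es r)) \<longlongrightarrow> s0 * 0 ^ nat n * (1 + 0)) (at_right 0)"
    by (intro tendsto_intros es_tendsto)
  moreover have "\<forall>\<^sub>F r in at_right 0. s0 * r ^ nat n * (1 + es r) = s r"
    using s_near_0 by (auto simp: eventually_at_right_field intro!: exI[of _ 1])
  moreover have "(0::real) ^ nat n = 0" using n_ge_1 by simp
  ultimately show ?thesis by (simp add: tendsto_cong)
qed

lemma s_nonzero_near_0: "\<forall>\<^sub>F r in at_right 0. s r \<noteq> 0"
proof -
  have "s0 \<noteq> 0"
  proof
    assume "s0 = 0"
    have "\<forall>\<^sub>F r in at_top. 0 = s r"
      using eventually_gt_at_top[of 0] by eventually_elim (simp add: s_near_0 \<open>s0 = 0\<close>)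
    then show False using tendsto_unique[OF _ tendsto_eventually s_tendsto_top] by force
  qed
  have "\<forall>\<^sub>F r in at_right 0. es r > -1" using order_tendstoD(1)[OF es_tendsto] by simp
  moreover have "\<forall>\<^sub>F r in at_right (0::real). r > 0" by (simp add: eventually_at_right_less)
  ultimately show ?thesis by eventually_elim (use \<open>s0 \<noteq> 0\<close> s_near_0 in auto)
qed

text \<open>The weight is chosen so that the derivative is \<open>a (s\<^sup>2 - 9/4 - 3/(2r)) exp(-3r/2) / r\<close>.\<close>
lemma weighted_a'_antimono:
  assumes "0 < t" "t \<le> x" and s_bound: "\<And>r. t \<le> r \<Longrightarrow> (s r)\<^sup>2 \<le> 9/4"
  shows "(a' x + 3/2 * a x) * exp (- (3/2) * x) / x \<le> (a' t + 3/2 * a t) * exp (- (3/2) * t) / t"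
proof (rule deriv_nonpos_imp_antimono[where g = "\<lambda>r. (a' r + 3/2 * a r) * exp (- (3/2) * r) / r"
      and g' = "\<lambda>r. a r * ((s r)\<^sup>2 - 9/4 - 3 / (2 * r)) * exp (- (3/2) * r) / r"])
  fix r assume "r \<in> {t..x}"
  then have "r > 0" "(s r)\<^sup>2 \<le> 9/4" using \<open>0 < t\<close> s_bound by auto
  show "((\<lambda>r. (a' r + 3/2 * a r) * exp (- (3/2) * r) / r) has_real_derivative
      a r * ((s r)\<^sup>2 - 9/4 - 3 / (2 * r)) * exp (- (3/2) * r) / r) (at r)"
    using \<open>r > 0\<close> by (auto intro!: derivative_eq_intros a_has_derivative a'_has_derivative
                          simp: field_simps power2_eq_square)
  show "a r * ((s r)\<^sup>2 - 9/4 - 3 / (2 * r)) * exp (- (3/2) * r) / r \<le> 0"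
  proof (rule divide_nonpos_pos[OF mult_nonpos_nonneg[OF mult_nonneg_nonpos]])
    show "(s r)\<^sup>2 - 9/4 - 3 / (2 * r) \<le> 0"
      using \<open>r > 0\<close> \<open>(s r)\<^sup>2 \<le> 9/4\<close> by (smt (verit) divide_pos_pos)
  qed (use a_pos[OF \<open>r > 0\<close>] \<open>r > 0\<close> in auto)
qed (rule \<open>t \<le> x\<close>)

text \<open>Were \<open>a' + 3/2 a\<close> negative at \<open>t\<close>, the previous lemma would keep \<open>a'\<close> below that negative
  value beyond \<open>t\<close>, and \<open>a\<close> would become negative.\<close>
lemma a'_plus_a_nonneg:
  assumes "0 < t" and s_bound: "\<And>r. t \<le> r \<Longrightarrow> (s r)\<^sup>2 \<le> 9/4"
  shows "0 \<le> a' t + 3/2 * a t"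
proof (rule ccontr)
  define w where "w r = a' r + 3/2 * a r" for r
  assume "\<not> 0 \<le> a' t + 3/2 * a t"
  then have "w t < 0" unfolding w_def by simp
  have w_le: "w r \<le> w t" if "t \<le> r" for r
  proof -
    have "w r * exp (- (3/2) * r) / r \<le> w t * exp (- (3/2) * t) / t"
      unfolding w_def using weighted_a'_antimono[OF \<open>0 < t\<close> that s_bound] .
    then have "w r \<le> w t * exp (- (3/2) * t) / t * (r * exp ((3/2) * r))"
      using that \<open>0 < t\<close> by (simp add: exp_minus field_simps)
    also have "\<dots> \<le> w t * exp (- (3/2) * t) / t * (t * exp ((3/2) * t))"
      using \<open>w t < 0\<close> \<open>0 < t\<close> that
      by (intro mult_left_mono_neg mult_mono) (auto simp: divide_nonpos_pos mult_nonpos_nonneg)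
    also have "\<dots> = w t" using \<open>0 < t\<close> by (simp add: exp_minus field_simps)
    finally show ?thesis .
  qed
  define x where "x = t - a t / w t"
  have "t \<le> x" using a_pos[OF \<open>0 < t\<close>] \<open>w t < 0\<close> by (simp add: x_def divide_pos_neg less_imp_le)
  have "a x - w t * x \<le> a t - w t * t"
  proof (rule deriv_nonpos_imp_antimono[where g = "\<lambda>y. a y - w t * y" and g' = "\<lambda>y. a' y - w t"])
    fix y assume y: "y \<in> {t..x}"
    then have "y > 0" using \<open>0 < t\<close> by auto
    show "((\<lambda>y. a y - w t * y) has_real_derivative a' y - w t) (at y)"
      by (auto intro!: derivative_eq_intros a_has_derivative[OF \<open>y > 0\<close>])
    show "a' y - w t \<le> 0" using w_le[of y] y a_pos[OF \<open>y > 0\<close>] by (auto simp: w_def)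
  qed (rule \<open>t \<le> x\<close>)
  moreover have "w t * (x - t) = - a t" using \<open>w t < 0\<close> by (simp add: x_def field_simps)
  ultimately have "a x \<le> 0" by (simp add: algebra_simps)
  then show False using a_pos[of x] \<open>t \<le> x\<close> \<open>0 < t\<close> by simp
qed

lemma a_exp_lower_bound: "\<exists>R>0. \<exists>c>0. \<forall>r\<ge>R. c * exp (- (3/2) * r) \<le> a r"
proof -
  have "((\<lambda>r. (s r)\<^sup>2) \<longlongrightarrow> 1\<^sup>2) at_top" by (intro tendsto_intros s_tendsto_top)
  from order_tendstoD(2)[OF this, of "9/4"]
  obtain N where N: "\<And>r. r \<ge> N \<Longrightarrow> (s r)\<^sup>2 < 9/4"
    unfolding eventually_at_top_linorder by auto
  define R where "R = max N 1"
  have "R > 0" unfolding R_def by simp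
  have "a R * exp ((3/2) * R) \<le> a r * exp ((3/2) * r)" if "r \<ge> R" for r
  proof (rule deriv_nonneg_imp_mono[where g = "\<lambda>t. a t * exp ((3/2) * t)"
        and g' = "\<lambda>t. (a' t + 3/2 * a t) * exp ((3/2) * t)"])
    fix t assume "t \<in> {R..r}"
    then have "t > 0" "\<And>r. t \<le> r \<Longrightarrow> (s r)\<^sup>2 \<le> 9/4" using \<open>R > 0\<close> N by (auto simp: R_def less_imp_le)
    show "((\<lambda>t. a t * exp ((3/2) * t)) has_real_derivative (a' t + 3/2 * a t) * exp ((3/2) * t)) (at t)"
      by (auto intro!: derivative_eq_intros a_has_derivative[OF \<open>t > 0\<close>] simp: algebra_simps)
    show "(a' t + 3/2 * a t) * exp ((3/2) * t) \<ge> 0"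
      using a'_plus_a_nonneg[OF \<open>t > 0\<close>] \<open>\<And>r. t \<le> r \<Longrightarrow> (s r)\<^sup>2 \<le> 9/4\<close> by simp
  qed (rule that)
  then have "a R * exp ((3/2) * R) * exp (- (3/2) * r) \<le> a r" if "r \<ge> R" for r
    using that by (simp add: exp_minus field_simps)
  moreover have "a R * exp ((3/2) * R) > 0" using a_pos[OF \<open>R > 0\<close>] by simp
  ultimately show ?thesis using \<open>R > 0\<close> by blast
qed

end

section \<open>The flux of the W field\<close>

locale W_profile = NO_profile n s z s0 z0 es ez C \<mu>
  for n s z s0 z0 es ez C \<mu> +
  fixes m :: int and \<gamma> :: real and y u v :: "real \<Rightarrow> real" and nl :: bool
    and k u0 v0 :: real and eu ev :: "real \<Rightarrow> real" and Cw pw :: real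
  assumes \<gamma>_pos: "0 < \<gamma>" and \<gamma>_le_1: "\<gamma> \<le> 1"
    and y_def: "y = (\<lambda>r. \<gamma> * z r - (2 * \<gamma> * of_int n + of_int m) / (2 * r))"
    and W_eqs: "W_eqs nl \<gamma> s y u v"
    and k_gt: "k > - 1/2"
    and eu_tendsto: "(eu \<longlongrightarrow> 0) (at_right 0)" and ev_tendsto: "(ev \<longlongrightarrow> 0) (at_right 0)"
    and uv_near_0: "\<And>r. r > 0 \<Longrightarrow> u r = u0 * r powr k * (1 + eu r) \<and> v r = v0 * r powr k * (1 + ev r)"
    and uv_decay: "\<forall>\<^sub>F r in at_top. \<bar>u r\<bar> \<le> Cw * r powr pw * exp (- sqrt \<gamma> * r) \<and>
                                   \<bar>v r\<bar> \<le> Cw * r powr pw * exp (- sqrt \<gamma> * r)"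
begin

definition "K = 2 * \<gamma> * of_int n + of_int m"
text \<open>Both the nonlinear (\<open>\<kappa> = 2\<close>) and the linearized (\<open>\<kappa> = 0\<close>) equations are treated at once: the
  terms \<open>4 v u\<^sup>2\<close> and \<open>2 v\<^sup>2 u\<close> become \<open>2 \<kappa> v u\<^sup>2\<close> and \<open>\<kappa> v\<^sup>2 u\<close>.\<close>
definition "\<kappa> = (if nl then 2 else (0::real))"
definition "y' r = \<gamma> * deriv z r + K / (2 * r\<^sup>2)"
definition "y'' r = \<gamma> * deriv (deriv z) r - K / r ^ 3"
definition "Q r = 2 * (y r)\<^sup>2 + \<gamma> / 2 * (s r)\<^sup>2"

lemma u_has_derivative: "r > 0 \<Longrightarrow> (u has_real_derivative deriv u r) (at r)"
  and v_has_derivative: "r > 0 \<Longrightarrow> (v has_real_derivative deriv v r) (at r)"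
  and v'_has_derivative: "r > 0 \<Longrightarrow> (deriv v has_real_derivative deriv (deriv v) r) (at r)"
  using W_eqs DERIV_deriv_iff_real_differentiable unfolding W_eqs_def by blast+

lemma y_eq: "y r = \<gamma> * z r - K / (2 * r)"
  unfolding y_def K_def by simp

lemma y_has_derivative: "r > 0 \<Longrightarrow> (y has_real_derivative y' r) (at r)"
  unfolding y_eq[abs_def] y'_def
  by (auto intro!: derivative_eq_intros z_has_derivative simp: power2_eq_square field_simps)

lemma y'_has_derivative: "r > 0 \<Longrightarrow> (y' has_real_derivative y'' r) (at r)"
  unfolding y'_def[abs_def] y''_def
  by (auto intro!: derivative_eq_intros z'_has_derivative simp: power2_eq_square power3_eq_cube field_simps)

lemma y_ode: "r > 0 \<Longrightarrow> y'' r + y' r / r - y r / r\<^sup>2 = \<gamma> * z r * (s r)\<^sup>2"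
  unfolding y''_def y'_def y_eq z''_eq by (simp add: field_simps power2_eq_square power3_eq_cube)

lemma v_eq:
  "r > 0 \<Longrightarrow> deriv (deriv v) r + deriv v r / r - v r / r\<^sup>2
     + 2 * (2 * y' r * u r + y r * deriv u r + y r * u r / r)
     - 2 * \<kappa> * v r * (u r)\<^sup>2 - \<gamma> * v r * (s r)\<^sup>2 = 0"
  using W_eqs DERIV_imp_deriv[OF y_has_derivative] unfolding W_eqs_def \<kappa>_def by (cases nl) auto

lemma u_eq: "r > 0 \<Longrightarrow> deriv v r * y r - v r * y' r + (Q r + \<kappa> * (v r)\<^sup>2) * u r = 0"
  using W_eqs DERIV_imp_deriv[OF y_has_derivative] unfolding W_eqs_def \<kappa>_def Q_def by (cases nl) auto

lemma \<kappa>_nonneg: "\<kappa> \<ge> 0"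
  unfolding \<kappa>_def by simp

lemma Q_nonneg: "Q r \<ge> 0"
  unfolding Q_def using \<gamma>_pos by simp

lemma r_y_eq: "r > 0 \<Longrightarrow> r * y r = \<gamma> * a r - K / 2"
  unfolding y_eq a_def by (simp add: field_simps)

definition "flux r = r * (deriv v r + 2 * y r * u r) * v r - r * y' r * (v r)\<^sup>2 / y r"
definition "flux_uv r = - r * u r * v r * (\<gamma> * (s r)\<^sup>2 / 2 + \<kappa> * (v r)\<^sup>2) / y r"

definition "D_v r = \<gamma> * r * (s r)\<^sup>2 * (v r)\<^sup>2 * ((y r - z r) * y r) / (y r)\<^sup>2"
definition "D_u r = r * (u r)\<^sup>2 * ((Q r + \<kappa> * (v r)\<^sup>2)\<^sup>2 - 2 * Q r * (y r)\<^sup>2) / (y r)\<^sup>2"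

lemma flux_eq_flux_uv:
  assumes "r > 0" "y r \<noteq> 0" shows "flux r = flux_uv r"
proof -
  have v': "deriv v r = (v r * y' r - (Q r + \<kappa> * (v r)\<^sup>2) * u r) / y r"
    using u_eq[OF assms(1)] assms(2) by (simp add: field_simps)
  show ?thesis
    unfolding flux_def flux_uv_def v' Q_def using assms by (simp add: field_simps power2_eq_square)
qed

lemma flux_has_derivative:
  assumes "r > 0" "y r \<noteq> 0" shows "(flux has_real_derivative D_v r + D_u r) (at r)"
proof -
  have "(flux has_real_derivative
     (deriv v r + 2 * y r * u r) * v r + r * (deriv (deriv v) r + 2 * (y' r * u r + y r * deriv u r)) * v r
       + r * (deriv v r + 2 * y r * u r) * deriv v r
     - (y' r * (v r)\<^sup>2 / y r + r * y'' r * (v r)\<^sup>2 / y r + r * y' r * (2 * v r * deriv v r) / y r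
        - r * y' r * (v r)\<^sup>2 * y' r / (y r)\<^sup>2)) (at r)"
    unfolding flux_def[abs_def] using assms
    by (auto intro!: derivative_eq_intros v_has_derivative v'_has_derivative u_has_derivative
        y_has_derivative y'_has_derivative simp: field_simps power2_eq_square)
  moreover have "(deriv v r + 2 * y r * u r) * v r + r * (deriv (deriv v) r + 2 * (y' r * u r + y r * deriv u r)) * v r
       + r * (deriv v r + 2 * y r * u r) * deriv v r
     - (y' r * (v r)\<^sup>2 / y r + r * y'' r * (v r)\<^sup>2 / y r + r * y' r * (2 * v r * deriv v r) / y r
        - r * y' r * (v r)\<^sup>2 * y' r / (y r)\<^sup>2) = D_v r + D_u r"
    unfolding D_v_def D_u_def Q_def
    by (rule flux_derivative_identity[OF assms v_eq[OF assms(1)] u_eq[OF assms(1), unfolded Q_def]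
          y_ode[OF assms(1)]])
  ultimately show ?thesis by simp
qed

lemma D_u_lower:
  assumes "r > 0"
  shows "r * (u r)\<^sup>2 * (Q r * (\<gamma> * (s r)\<^sup>2 / 2) + \<kappa>\<^sup>2 * (v r) ^ 4) / (y r)\<^sup>2 \<le> D_u r"
proof -
  have "(Q r + \<kappa> * (v r)\<^sup>2)\<^sup>2 - 2 * Q r * (y r)\<^sup>2
      = Q r * (\<gamma> * (s r)\<^sup>2 / 2) + \<kappa>\<^sup>2 * (v r) ^ 4 + 2 * Q r * (\<kappa> * (v r)\<^sup>2)"
    unfolding Q_def by (simp add: power2_eq_square power4_eq_xxxx algebra_simps)
  moreover have "0 \<le> 2 * Q r * (\<kappa> * (v r)\<^sup>2)" using Q_nonneg \<kappa>_nonneg by simp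
  ultimately have "Q r * (\<gamma> * (s r)\<^sup>2 / 2) + \<kappa>\<^sup>2 * (v r) ^ 4 \<le> (Q r + \<kappa> * (v r)\<^sup>2)\<^sup>2 - 2 * Q r * (y r)\<^sup>2"
    by linarith
  then show ?thesis
    unfolding D_u_def using assms by (intro divide_right_mono mult_left_mono) auto
qed

lemma D_u_nonneg:
  assumes "r > 0" shows "D_u r \<ge> 0"
proof -
  have "0 \<le> r * (u r)\<^sup>2 * (Q r * (\<gamma> * (s r)\<^sup>2 / 2) + \<kappa>\<^sup>2 * (v r) ^ 4) / (y r)\<^sup>2"
    using assms Q_nonneg \<gamma>_pos by (intro divide_nonneg_nonneg mult_nonneg_nonneg add_nonneg_nonneg) auto
  then show ?thesis using D_u_lower[OF assms] by linarith
qed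

text \<open>Since \<open>y - z\<close> is the auxiliary field \<open>x\<close>, this is the condition \<open>x y \<ge> 0\<close> (with \<open>y \<noteq> 0\<close>).\<close>
definition "sign_condition \<longleftrightarrow> (\<forall>r>0. y r \<noteq> 0 \<and> 0 \<le> (y r - z r) * y r)"

lemma sign_condition_y_ne_0: "sign_condition \<Longrightarrow> r > 0 \<Longrightarrow> y r \<noteq> 0"
  unfolding sign_condition_def by blast

lemma D_v_nonneg: "sign_condition \<Longrightarrow> r > 0 \<Longrightarrow> D_v r \<ge> 0"
  unfolding sign_condition_def D_v_def using \<gamma>_pos by simp

text \<open>For \<open>m \<ge> 0\<close> both \<open>x\<close> and \<open>y\<close> are negative, for \<open>m \<le> -2n\<close> both are nonnegative;
  this uses \<open>0 < a < n\<close>.\<close>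
lemma sign_condition_if_outside:
  assumes "\<not> (- 2 * n < m \<and> m < 0)" shows "sign_condition"
  unfolding sign_condition_def
proof (intro allI impI)
  fix r :: real assume "r > 0"
  define P where "P = r * y r"
  have P: "P = \<gamma> * a r - K / 2" unfolding P_def using r_y_eq[OF \<open>r > 0\<close>] .
  have a: "0 < a r" "a r < of_int n" using a_pos[OF \<open>r > 0\<close>] a_less_n[OF \<open>r > 0\<close>] by auto
  have "P \<noteq> 0 \<and> 0 \<le> P * (P - a r)"
  proof (cases "m \<ge> 0")
    case True
    have "\<gamma> * (a r - of_int n) < 0" using \<gamma>_pos a by (simp add: mult_pos_neg)
    then have "P < 0" unfolding P K_def using True by (simp add: algebra_simps)
    then show ?thesis using a by (simp add: mult_nonpos_nonpos)
  next
    case False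
    then have m: "of_int m \<le> - 2 * (of_int n :: real)" using assms by simp
    have "P - a r = (1 - \<gamma>) * (of_int n - a r) + (- of_int m / 2 - of_int n)"
      unfolding P K_def by (simp add: algebra_simps)
    moreover have "(1 - \<gamma>) * (of_int n - a r) \<ge> 0" using \<gamma>_le_1 a by simp
    ultimately have "P - a r \<ge> 0" using m by simp
    moreover have "P > 0"
      using \<open>P - a r \<ge> 0\<close> a by simp
    ultimately show ?thesis by simp
  qed
  moreover have "(y r - z r) * y r = P * (P - a r) / r\<^sup>2"
    unfolding P_def a_def using \<open>r > 0\<close> by (simp add: field_simps power2_eq_square)
  ultimately show "y r \<noteq> 0 \<and> 0 \<le> (y r - z r) * y r"
    using \<open>r > 0\<close> unfolding P_def by simp
qed

lemma y_ne_z_if_m_eq_0: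
  assumes "m = 0" "r > 0" shows "y r \<noteq> z r"
proof -
  have "r * y r - r * z r = (\<gamma> - 1) * a r - \<gamma> * of_int n"
    using r_y_eq[OF assms(2)] assms(1) unfolding a_def K_def by (simp add: algebra_simps)
  moreover have "(\<gamma> - 1) * a r \<le> 0" using \<gamma>_le_1 a_pos[OF assms(2)] by (simp add: mult_nonpos_nonneg)
  moreover have "\<gamma> * of_int n > 0" using \<gamma>_pos n_ge_1 by simp
  ultimately show ?thesis by auto
qed


lemma flux_uv_mono:
  assumes sign: "sign_condition" and "0 < p" "p \<le> q" shows "flux_uv p \<le> flux_uv q"
proof -
  note y_ne_0 = sign_condition_y_ne_0[OF sign]
  have "flux p \<le> flux q"
  proof (rule deriv_nonneg_imp_mono[where g = flux and g' = "\<lambda>r. D_v r + D_u r"])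
    fix r assume "r \<in> {p..q}"
    then have "r > 0" using \<open>0 < p\<close> by simp
    show "(flux has_real_derivative D_v r + D_u r) (at r)" by (rule flux_has_derivative[OF \<open>r > 0\<close> y_ne_0[OF \<open>r > 0\<close>]])
    show "0 \<le> D_v r + D_u r" using D_v_nonneg[OF sign \<open>r > 0\<close>] D_u_nonneg[OF \<open>r > 0\<close>] by simp
  qed (rule \<open>p \<le> q\<close>)
  moreover have "flux p = flux_uv p" "flux q = flux_uv q"
    using flux_eq_flux_uv y_ne_0 \<open>0 < p\<close> \<open>p \<le> q\<close> by auto
  ultimately show ?thesis by simp
qed

text \<open>A nondecreasing flux that vanishes at both ends vanishes identically, and so does its derivative.\<close>
lemma D_eq_0_if_flux_uv_tendsto_0:
  assumes sign: "sign_condition" and lim_0: "(flux_uv \<longlongrightarrow> 0) (at_right 0)"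
    and lim_top: "(flux_uv \<longlongrightarrow> 0) at_top" and "r > 0"
  shows "D_v r + D_u r = 0"
proof -
  note y_ne_0 = sign_condition_y_ne_0[OF sign]
  have flux_0: "flux t = 0" if "t > 0" for t
  proof -
    have "\<forall>\<^sub>F d in at_right 0. flux_uv d \<le> flux_uv t"
      unfolding eventually_at_right_field using flux_uv_mono[OF sign] that by (intro exI[of _ t]) auto
    then have "0 \<le> flux_uv t" using tendsto_upperbound[OF lim_0] by simp
    moreover have "\<forall>\<^sub>F d in at_top. flux_uv t \<le> flux_uv d"
      unfolding eventually_at_top_linorder using flux_uv_mono[OF sign] that by (intro exI[of _ t]) auto
    then have "flux_uv t \<le> 0" using tendsto_lowerbound[OF lim_top] by simp
    ultimately show ?thesis using flux_eq_flux_uv[OF that y_ne_0[OF that]] by simp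
  qed
  have "((\<lambda>_. 0) has_real_derivative D_v r + D_u r) (at r)"
    by (rule has_field_derivative_transform_within_open[OF flux_has_derivative[OF \<open>r > 0\<close> y_ne_0[OF \<open>r > 0\<close>]],
          of "{0<..}"]) (use \<open>r > 0\<close> flux_0 in auto)
  then show ?thesis using DERIV_const DERIV_unique by blast
qed

lemma u_eq_0_if_D_eq_0:
  assumes sign: "sign_condition" and "r > 0" "s r \<noteq> 0" and D: "D_v r + D_u r = 0"
  shows "u r = 0"
proof -
  have "y r \<noteq> 0" using sign_condition_y_ne_0[OF sign \<open>r > 0\<close>] .
  define X where "X = Q r * (\<gamma> * (s r)\<^sup>2 / 2) + \<kappa>\<^sup>2 * (v r) ^ 4"
  have "X > 0"
    unfolding X_def Q_def using \<open>s r \<noteq> 0\<close> \<open>y r \<noteq> 0\<close> \<gamma>_pos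
    by (intro mult_pos_pos add_pos_nonneg) auto
  have "D_u r = 0" using D D_v_nonneg[OF sign \<open>r > 0\<close>] D_u_nonneg[OF \<open>r > 0\<close>] by simp
  then have le: "r * (u r)\<^sup>2 * X / (y r)\<^sup>2 \<le> 0" using D_u_lower[OF \<open>r > 0\<close>] unfolding X_def by linarith
  have eq: "(u r)\<^sup>2 * X = r * (u r)\<^sup>2 * X / (y r)\<^sup>2 * ((y r)\<^sup>2 / r)"
    using \<open>r > 0\<close> \<open>y r \<noteq> 0\<close> by (simp add: field_simps)
  have "(u r)\<^sup>2 * X \<le> 0" unfolding eq using le \<open>r > 0\<close> by (intro mult_nonpos_nonneg) auto
  then show ?thesis using \<open>X > 0\<close> by (simp add: mult_le_0_iff)
qed

lemma v_eq_0_if_D_eq_0: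
  assumes sign: "sign_condition" and "r > 0" "s r \<noteq> 0" "y r \<noteq> z r" and D: "D_v r + D_u r = 0"
  shows "v r = 0"
proof -
  have "y r \<noteq> 0" using sign_condition_y_ne_0[OF sign \<open>r > 0\<close>] .
  have "D_v r = 0" using D D_v_nonneg[OF sign \<open>r > 0\<close>] D_u_nonneg[OF \<open>r > 0\<close>] by simp
  then show ?thesis unfolding D_v_def using \<open>r > 0\<close> \<open>s r \<noteq> 0\<close> \<open>y r \<noteq> z r\<close> \<open>y r \<noteq> 0\<close> \<gamma>_pos by simp
qed

lemma u0_eq_0_if_vanishing:
  assumes "\<forall>\<^sub>F r in at_right 0. u r = 0" shows "u0 = 0"
proof (rule coefficient_eq_0_if_vanishing_at_right_0[OF eu_tendsto])
  show "\<forall>\<^sub>F r in at_right 0. r powr k \<noteq> 0 \<and> u0 * r powr k * (1 + eu r) = 0"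
    using assms eventually_at_right_less[of 0] by eventually_elim (use uv_near_0 in auto)
qed

lemma v0_eq_0_if_vanishing:
  assumes "\<forall>\<^sub>F r in at_right 0. v r = 0" shows "v0 = 0"
proof (rule coefficient_eq_0_if_vanishing_at_right_0[OF ev_tendsto])
  show "\<forall>\<^sub>F r in at_right 0. r powr k \<noteq> 0 \<and> v0 * r powr k * (1 + ev r) = 0"
    using assms eventually_at_right_less[of 0] by eventually_elim (use uv_near_0 in auto)
qed

section \<open>Boundary behaviour of the flux\<close>

lemma uv_powr_ratio_tendsto:
  "((\<lambda>r. u r ^ i * v r ^ j / (r powr k) ^ (i + j)) \<longlongrightarrow> u0 ^ i * v0 ^ j) (at_right 0)"
proof -
  have "((\<lambda>r. u0 ^ i * v0 ^ j * ((1 + eu r) ^ i * (1 + ev r) ^ j))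
          \<longlongrightarrow> u0 ^ i * v0 ^ j * ((1 + 0) ^ i * (1 + 0) ^ j)) (at_right 0)"
    by (intro tendsto_intros eu_tendsto ev_tendsto)
  moreover have "\<forall>\<^sub>F r in at_right 0.
      u0 ^ i * v0 ^ j * ((1 + eu r) ^ i * (1 + ev r) ^ j) = u r ^ i * v r ^ j / (r powr k) ^ (i + j)"
    using eventually_at_right_less[of 0]
  proof eventually_elim
    case (elim r)
    then have "u r ^ i * v r ^ j = u0 ^ i * v0 ^ j * ((1 + eu r) ^ i * (1 + ev r) ^ j) * (r powr k) ^ (i + j)"
      by (simp add: uv_near_0 power_mult_distrib power_add mult_ac)
    then show ?case using elim by simp
  qed
  ultimately show ?thesis by (simp add: tendsto_cong)
qed

lemma r_y_tendsto_0: "((\<lambda>r. r * y r) \<longlongrightarrow> - of_int m / 2) (at_right 0)"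
proof -
  have "((\<lambda>r. \<gamma> * a r - K / 2) \<longlongrightarrow> \<gamma> * of_int n - K / 2) (at_right 0)"
    by (intro tendsto_intros a_tendsto_0)
  moreover have "\<forall>\<^sub>F r in at_right 0. \<gamma> * a r - K / 2 = r * y r"
    using eventually_at_right_less[of 0] by eventually_elim (simp add: r_y_eq)
  moreover have "\<gamma> * of_int n - K / 2 = - of_int m / 2" unfolding K_def by (simp add: field_simps)
  ultimately show ?thesis by (simp add: tendsto_cong)
qed

lemma r_y_tendsto_top: "((\<lambda>r. r * y r) \<longlongrightarrow> - K / 2) at_top"
proof -
  have "((\<lambda>r. \<gamma> * a r - K / 2) \<longlongrightarrow> \<gamma> * 0 - K / 2) at_top"
    by (intro tendsto_intros a_tendsto_top)
  moreover have "\<forall>\<^sub>F r in at_top. \<gamma> * a r - K / 2 = r * y r"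
    using eventually_gt_at_top[of 0] by eventually_elim (simp add: r_y_eq)
  ultimately show ?thesis by (simp add: tendsto_cong)
qed

text \<open>Near the origin \<open>u v = O(r^(2k))\<close> and \<open>u v\<^sup>3 = O(r^(4k))\<close>, and \<open>2 + 4k > 0\<close>.\<close>
lemma r_sq_uv_tendsto_0: "((\<lambda>r. r\<^sup>2 * (u r * v r)) \<longlongrightarrow> 0) (at_right 0)"
proof -
  have "((\<lambda>r. r\<^sup>2 * (r powr k) ^ 2) \<longlongrightarrow> 0) (at_right 0)" using k_gt by real_asymp
  then have "((\<lambda>r. u r ^ 1 * v r ^ 1 / (r powr k) ^ (1 + 1) * (r\<^sup>2 * (r powr k) ^ 2)) \<longlongrightarrow> u0 ^ 1 * v0 ^ 1 * 0)
      (at_right 0)"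
    by (intro tendsto_intros uv_powr_ratio_tendsto)
  moreover have "\<forall>\<^sub>F r in at_right 0.
      u r ^ 1 * v r ^ 1 / (r powr k) ^ (1 + 1) * (r\<^sup>2 * (r powr k) ^ 2) = r\<^sup>2 * (u r * v r)"
    using eventually_at_right_less[of 0] by eventually_elim (simp add: field_simps power2_eq_square)
  ultimately show ?thesis by (simp add: tendsto_cong)
qed

lemma r_sq_uv3_tendsto_0: "((\<lambda>r. r\<^sup>2 * (u r * v r ^ 3)) \<longlongrightarrow> 0) (at_right 0)"
proof -
  have "((\<lambda>r. r\<^sup>2 * (r powr k) ^ 4) \<longlongrightarrow> 0) (at_right 0)" using k_gt by real_asymp
  then have "((\<lambda>r. u r ^ 1 * v r ^ 3 / (r powr k) ^ (1 + 3) * (r\<^sup>2 * (r powr k) ^ 4)) \<longlongrightarrow> u0 ^ 1 * v0 ^ 3 * 0)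
      (at_right 0)"
    by (intro tendsto_intros uv_powr_ratio_tendsto)
  moreover have "\<forall>\<^sub>F r in at_right 0.
      u r ^ 1 * v r ^ 3 / (r powr k) ^ (1 + 3) * (r\<^sup>2 * (r powr k) ^ 4) = r\<^sup>2 * (u r * v r ^ 3)"
    using eventually_at_right_less[of 0] by eventually_elim (simp add: field_simps)
  ultimately show ?thesis by (simp add: tendsto_cong)
qed

lemma flux_uv_eq_r_sq: "r > 0 \<Longrightarrow>
    flux_uv r = - (\<gamma> / 2 * (r\<^sup>2 * (u r * v r)) * (s r)\<^sup>2 + \<kappa> * (r\<^sup>2 * (u r * v r ^ 3))) / (r * y r)"
  unfolding flux_uv_def by (cases "y r = 0") (simp_all add: field_simps power2_eq_square power3_eq_cube)

lemma flux_uv_tendsto_0_if_m_ne_0: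
  assumes "m \<noteq> 0" shows "(flux_uv \<longlongrightarrow> 0) (at_right 0)"
proof -
  have "((\<lambda>r. - (\<gamma> / 2 * (r\<^sup>2 * (u r * v r)) * (s r)\<^sup>2 + \<kappa> * (r\<^sup>2 * (u r * v r ^ 3))) / (r * y r))
      \<longlongrightarrow> - (\<gamma> / 2 * 0 * 0\<^sup>2 + \<kappa> * 0) / (- of_int m / 2)) (at_right 0)"
    using assms
    by (intro tendsto_intros r_sq_uv_tendsto_0 r_sq_uv3_tendsto_0 s_tendsto_0 r_y_tendsto_0) auto
  moreover have "\<forall>\<^sub>F r in at_right 0.
      - (\<gamma> / 2 * (r\<^sup>2 * (u r * v r)) * (s r)\<^sup>2 + \<kappa> * (r\<^sup>2 * (u r * v r ^ 3))) / (r * y r) = flux_uv r"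
    using eventually_at_right_less[of 0] by eventually_elim (simp add: flux_uv_eq_r_sq)
  ultimately show ?thesis by (simp add: tendsto_cong)
qed


lemma v0_eq_0_if_u_vanishes:
  assumes sign: "sign_condition" and "m \<noteq> 0" and "e > 0"
    and u_0: "\<And>r. 0 < r \<Longrightarrow> r < e \<Longrightarrow> u r = 0"
  shows "v0 = 0"
proof -
  note y_ne_0 = sign_condition_y_ne_0[OF sign]
  define c where "c = v (e/2) / y (e/2)"
  have v_eq_c_y: "v r = c * y r" if "0 < r" "r < e" for r
  proof -
    have "v r / y r = c" unfolding c_def
    proof (rule DERIV_isconst3[of 0 e r "e/2" "\<lambda>r. v r / y r"])
      fix x :: real assume x: "x \<in> {0<..<e}"
      then have "x > 0" by simp
      have "((\<lambda>r. v r / y r) has_real_derivative (deriv v x * y x - v x * y' x) / (y x * y x)) (at x)"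
        using y_ne_0[OF \<open>x > 0\<close>]
        by (auto intro!: derivative_eq_intros v_has_derivative[OF \<open>x > 0\<close>] y_has_derivative[OF \<open>x > 0\<close>])
      moreover have "deriv v x * y x - v x * y' x = 0" using u_eq[OF \<open>x > 0\<close>] u_0[of x] x by simp
      ultimately show "((\<lambda>r. v r / y r) has_real_derivative 0) (at x)" by simp
    qed (use that \<open>e > 0\<close> in auto)
    then show ?thesis using y_ne_0[OF \<open>0 < r\<close>] by (simp add: field_simps)
  qed
  txt \<open>So \<open>r v = c (r y)\<close> near \<open>0\<close>, where \<open>r v \<rightarrow> 0\<close> but \<open>r y \<rightarrow> -m/2 \<noteq> 0\<close>.\<close>
  have "((\<lambda>r. r * r powr k) \<longlongrightarrow> 0) (at_right 0)" using k_gt by real_asymp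
  from tendsto_mult[OF uv_powr_ratio_tendsto[of 0 1] this]
  have "((\<lambda>r. u r ^ 0 * v r ^ 1 / (r powr k) ^ (0 + 1) * (r * r powr k)) \<longlongrightarrow> 0) (at_right 0)" by simp
  moreover have "\<forall>\<^sub>F r in at_right 0. u r ^ 0 * v r ^ 1 / (r powr k) ^ (0 + 1) * (r * r powr k) = c * (r * y r)"
    unfolding eventually_at_right_field using v_eq_c_y \<open>e > 0\<close> by (intro exI[of _ e]) auto
  ultimately have "((\<lambda>r. c * (r * y r)) \<longlongrightarrow> 0) (at_right 0)" by (rule Lim_transform_eventually)
  moreover have "((\<lambda>r. c * (r * y r)) \<longlongrightarrow> c * (- of_int m / 2)) (at_right 0)"
    by (intro tendsto_intros r_y_tendsto_0)
  ultimately have "c * (- of_int m / 2) = 0" using tendsto_unique[OF trivial_limit_at_right_real] by blast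
  then have "c = 0" using \<open>m \<noteq> 0\<close> by simp
  then have "\<forall>\<^sub>F r in at_right 0. v r = 0"
    unfolding eventually_at_right_field using v_eq_c_y \<open>e > 0\<close> by (intro exI[of _ e]) auto
  then show ?thesis by (rule v0_eq_0_if_vanishing)
qed

lemma y_eq_if_m_eq_0: "m = 0 \<Longrightarrow> r > 0 \<Longrightarrow> y r = r * (\<gamma> * (z0 + ez r))"
  unfolding y_eq K_def using z_near_0[of r] by (simp add: field_simps power2_eq_square)

lemma flux_uv_eq_if_m_eq_0:
  assumes "m = 0" "r > 0"
  shows "flux_uv r = - (u r * v r * (s r)\<^sup>2 / 2 + \<kappa> * (u r * v r ^ 3) / \<gamma>) / (z0 + ez r)"
proof -
  define w where "w = z0 + ez r"
  have "flux_uv r = - (r * (u r * v r * (\<gamma> * (s r)\<^sup>2 / 2 + \<kappa> * (v r)\<^sup>2))) / (r * (\<gamma> * w))"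
    unfolding flux_uv_def y_eq_if_m_eq_0[OF assms] w_def by (simp add: mult_ac)
  also have "\<dots> = - (u r * v r * (\<gamma> * (s r)\<^sup>2 / 2 + \<kappa> * (v r)\<^sup>2)) / (\<gamma> * w)"
    using \<open>r > 0\<close> by simp
  also have "\<dots> = - (u r * v r * (s r)\<^sup>2 / 2 + \<kappa> * (u r * v r ^ 3) / \<gamma>) / w"
    using \<gamma>_pos by (cases "w = 0") (simp_all add: field_simps power2_eq_square power3_eq_cube)
  finally show ?thesis unfolding w_def .
qed

lemma uv_s_sq_tendsto_0: "((\<lambda>r. u r * v r * (s r)\<^sup>2) \<longlongrightarrow> 0) (at_right 0)"
proof -
  have "((\<lambda>r. r powr k * r) \<longlongrightarrow> 0) (at_right 0)" using k_gt by real_asymp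
  then have "((\<lambda>r. s0 * (r powr k * r) * r ^ (nat n - 1) * (1 + es r)) \<longlongrightarrow> s0 * 0 * 0 ^ (nat n - 1) * (1 + 0))
      (at_right 0)"
    by (intro tendsto_intros es_tendsto)
  moreover have "\<forall>\<^sub>F r in at_right 0. s0 * (r powr k * r) * r ^ (nat n - 1) * (1 + es r) = r powr k * s r"
    using eventually_at_right_less[of 0]
  proof eventually_elim
    case (elim r)
    have "r ^ nat n = r * r ^ (nat n - 1)" using n_ge_1 by (simp add: power_eq_if)
    then show ?case using s_near_0[OF elim] by simp
  qed
  ultimately have "((\<lambda>r. r powr k * s r) \<longlongrightarrow> s0 * 0 * 0 ^ (nat n - 1) * (1 + 0)) (at_right 0)"
    by (rule Lim_transform_eventually)
  from tendsto_mult[OF uv_powr_ratio_tendsto[of 1 1] tendsto_power[OF this, of 2]]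
  have "((\<lambda>r. u r ^ 1 * v r ^ 1 / (r powr k) ^ (1 + 1) * (r powr k * s r)\<^sup>2) \<longlongrightarrow> 0) (at_right 0)" by simp
  moreover have "\<forall>\<^sub>F r in at_right 0. u r ^ 1 * v r ^ 1 / (r powr k) ^ (1 + 1) * (r powr k * s r)\<^sup>2 = u r * v r * (s r)\<^sup>2"
    using eventually_at_right_less[of 0] by eventually_elim (simp add: field_simps power2_eq_square)
  ultimately show ?thesis by (rule Lim_transform_eventually)
qed

lemma flux_uv_tendsto_0_if_m_eq_0:
  assumes "m = 0" and "\<kappa> = 0 \<or> k > 0" shows "(flux_uv \<longlongrightarrow> 0) (at_right 0)"
proof -
  have "((\<lambda>r. \<kappa> * (u r * v r ^ 3)) \<longlongrightarrow> 0) (at_right 0)"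
  proof (cases "\<kappa> = 0")
    case False
    then have "k > 0" using assms(2) by simp
    then have "((\<lambda>r. (r powr k) ^ 4) \<longlongrightarrow> 0) (at_right 0)" by real_asymp
    from tendsto_mult[OF uv_powr_ratio_tendsto[of 1 3] this]
    have "((\<lambda>r. u r ^ 1 * v r ^ 3 / (r powr k) ^ (1 + 3) * (r powr k) ^ 4) \<longlongrightarrow> 0) (at_right 0)" by simp
    moreover have "\<forall>\<^sub>F r in at_right 0. u r ^ 1 * v r ^ 3 / (r powr k) ^ (1 + 3) * (r powr k) ^ 4 = u r * v r ^ 3"
      using eventually_at_right_less[of 0] by eventually_elim simp
    ultimately have "((\<lambda>r. u r * v r ^ 3) \<longlongrightarrow> 0) (at_right 0)" by (simp add: tendsto_cong)
    then show ?thesis by (intro tendsto_mult_right_zero)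
  qed simp
  then have "((\<lambda>r. - (u r * v r * (s r)\<^sup>2 / 2 + \<kappa> * (u r * v r ^ 3) / \<gamma>) / (z0 + ez r))
      \<longlongrightarrow> - (0 / 2 + 0 / \<gamma>) / (z0 + 0)) (at_right 0)"
    using z0_neg \<gamma>_pos by (intro tendsto_intros uv_s_sq_tendsto_0 ez_tendsto) auto
  moreover have "\<forall>\<^sub>F r in at_right 0.
      - (u r * v r * (s r)\<^sup>2 / 2 + \<kappa> * (u r * v r ^ 3) / \<gamma>) / (z0 + ez r) = flux_uv r"
    using eventually_at_right_less[of 0] by eventually_elim (simp add: flux_uv_eq_if_m_eq_0 assms(1))
  ultimately show ?thesis by (simp add: tendsto_cong)
qed

lemma uv_s_sq_over_powr_tendsto_0:
  assumes "k \<le> 0" shows "((\<lambda>r. u r * v r * (s r)\<^sup>2 / (r powr k) ^ 4) \<longlongrightarrow> 0) (at_right 0)"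
proof (rule Lim_null_comparison)
  have "1 \<le> (r powr k) ^ 4" if "0 < r" "r < 1" for r
    using powr_mono2'[OF \<open>k \<le> 0\<close> that(1), of 1] that by (simp add: one_le_power)
  then have "\<forall>\<^sub>F r in at_right 0. 0 < r \<and> 1 \<le> (r powr k) ^ 4"
    unfolding eventually_at_right_field by (intro exI[of _ 1]) auto
  then show "\<forall>\<^sub>F r in at_right 0. norm (u r * v r * (s r)\<^sup>2 / (r powr k) ^ 4) \<le> \<bar>u r * v r * (s r)\<^sup>2\<bar>"
    by eventually_elim (simp add: abs_div divide_left_mono[of 1, simplified])
  show "((\<lambda>r. \<bar>u r * v r * (s r)\<^sup>2\<bar>) \<longlongrightarrow> 0) (at_right 0)"
    using tendsto_rabs_zero[OF uv_s_sq_tendsto_0] .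
qed

lemma flux_uv_powr_lower_bound_if_m_eq_0:
  assumes "m = 0" and "k \<le> 0"
  obtains c where "\<forall>\<^sub>F r in at_right 0. - c * r powr (4 * k) \<le> flux_uv r"
proof -
  have lim_uv3: "((\<lambda>r. u r * v r ^ 3 / (r powr k) ^ 4) \<longlongrightarrow> u0 * v0 ^ 3) (at_right 0)"
    using uv_powr_ratio_tendsto[of 1 3] by simp
  define F where "F r = - (u r * v r * (s r)\<^sup>2 / (r powr k) ^ 4 / 2
      + \<kappa> * (u r * v r ^ 3 / (r powr k) ^ 4) / \<gamma>) / (z0 + ez r)" for r
  define L where "L = - (0 / 2 + \<kappa> * (u0 * v0 ^ 3) / \<gamma>) / (z0 + 0)"
  have "(F \<longlongrightarrow> L) (at_right 0)"
    unfolding F_def[abs_def] L_def using z0_neg \<gamma>_pos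
    by (intro tendsto_intros ez_tendsto uv_s_sq_over_powr_tendsto_0[OF \<open>k \<le> 0\<close>] lim_uv3) auto
  then have "\<forall>\<^sub>F r in at_right 0. L - 1 < F r" by (rule order_tendstoD(1)) simp
  with eventually_at_right_less[of 0]
  have "\<forall>\<^sub>F r in at_right 0. - (1 - L) * r powr (4 * k) \<le> flux_uv r"
  proof eventually_elim
    case (elim r)
    define P where "P = (r powr k) ^ 4"
    define w where "w = z0 + ez r"
    have "P > 0" using elim unfolding P_def by simp
    have "flux_uv r = F r * P"
      unfolding F_def flux_uv_eq_if_m_eq_0[OF \<open>m = 0\<close> elim(1)] w_def[symmetric] P_def[symmetric]
      using \<open>P > 0\<close> \<gamma>_pos by (cases "w = 0") (simp_all add: field_simps)
    moreover have "(L - 1) * P \<le> F r * P"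
      using mult_right_mono[OF less_imp_le[OF elim(2)] less_imp_le[OF \<open>P > 0\<close>]] .
    moreover have "P = r powr (4 * k)" using elim unfolding P_def by (simp add: powr_power)
    ultimately show ?case by (simp add: algebra_simps)
  qed
  then show thesis by (rule that)
qed


lemma D_powr_lower_bound_if_m_eq_0:
  assumes sign: "sign_condition" and "m = 0" and "nl" and "u0 \<noteq> 0" and "v0 \<noteq> 0"
  obtains c where "c > 0" and "\<forall>\<^sub>F r in at_right 0. c * r powr (6 * k) / r \<le> D_v r + D_u r"
proof -
  define F where "F r = \<kappa>\<^sup>2 * (u r ^ 2 * v r ^ 4 / (r powr k) ^ 6) / (\<gamma>\<^sup>2 * (z0 + ez r)\<^sup>2)" for r
  define b where "b = \<kappa>\<^sup>2 * (u0 ^ 2 * v0 ^ 4) / (\<gamma>\<^sup>2 * (z0 + 0)\<^sup>2)"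
  have "b > 0" unfolding b_def \<kappa>_def using \<open>nl\<close> \<open>u0 \<noteq> 0\<close> \<open>v0 \<noteq> 0\<close> \<gamma>_pos z0_neg by simp
  have "((\<lambda>r. u r ^ 2 * v r ^ 4 / (r powr k) ^ 6) \<longlongrightarrow> u0 ^ 2 * v0 ^ 4) (at_right 0)"
    using uv_powr_ratio_tendsto[of 2 4] by simp
  then have "(F \<longlongrightarrow> b) (at_right 0)"
    unfolding F_def[abs_def] b_def using z0_neg \<gamma>_pos by (intro tendsto_intros ez_tendsto) auto
  then have "\<forall>\<^sub>F r in at_right 0. b / 2 < F r" by (rule order_tendstoD(1)) (use \<open>b > 0\<close> in simp)
  with eventually_at_right_less[of 0]
  have "\<forall>\<^sub>F r in at_right 0. b / 2 * r powr (6 * k) / r \<le> D_v r + D_u r"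
  proof eventually_elim
    case (elim r)
    define P where "P = (r powr k) ^ 6"
    define w where "w = z0 + ez r"
    have "P > 0" using elim unfolding P_def by simp
    have "y r \<noteq> 0" using sign_condition_y_ne_0[OF sign elim(1)] .
    then have "w \<noteq> 0" using y_eq_if_m_eq_0[OF \<open>m = 0\<close> elim(1)] unfolding w_def by auto
    have "b / 2 * P / r \<le> F r * P / r"
      using elim \<open>P > 0\<close> by (intro divide_right_mono mult_right_mono) auto
    also have "\<dots> = r * (u r)\<^sup>2 * (\<kappa>\<^sup>2 * (v r) ^ 4) / (y r)\<^sup>2"
      unfolding F_def y_eq_if_m_eq_0[OF \<open>m = 0\<close> elim(1)] P_def[symmetric] w_def[symmetric]
      using \<open>P > 0\<close> \<open>w \<noteq> 0\<close> \<gamma>_pos elim(1) by (simp add: field_simps power2_eq_square)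
    also have "\<dots> \<le> r * (u r)\<^sup>2 * (Q r * (\<gamma> * (s r)\<^sup>2 / 2) + \<kappa>\<^sup>2 * (v r) ^ 4) / (y r)\<^sup>2"
      using elim(1) Q_nonneg \<gamma>_pos by (intro divide_right_mono mult_left_mono) auto
    also have "\<dots> \<le> D_v r + D_u r" using D_u_lower[OF elim(1)] D_v_nonneg[OF sign elim(1)] by simp
    finally show ?case using elim(1) unfolding P_def by (simp add: powr_power)
  qed
  then show thesis using \<open>b > 0\<close> by (intro that[of "b / 2"]) auto
qed

text \<open>For the nonlinear equations with \<open>m = 0\<close> and \<open>k \<le> 0\<close> the flux need not vanish at the
  origin; instead it grows too fast there to be bounded below as the asymptotics of \<open>u\<close>, \<open>v\<close> require.\<close>
lemma small_k_impossible_if_m_eq_0: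
  assumes sign: "sign_condition" and "m = 0" and "nl" and "k \<le> 0" and "u0 \<noteq> 0" and "v0 \<noteq> 0"
  shows False
proof -
  note y_ne_0 = sign_condition_y_ne_0[OF sign]
  obtain c where "c > 0" and D: "\<forall>\<^sub>F r in at_right 0. c * r powr (6 * k) / r \<le> D_v r + D_u r"
    using D_powr_lower_bound_if_m_eq_0[OF assms(1-3,5-6)] by blast
  obtain C where B: "\<forall>\<^sub>F r in at_right 0. - C * r powr (4 * k) \<le> flux_uv r"
    using flux_uv_powr_lower_bound_if_m_eq_0[OF \<open>m = 0\<close> \<open>k \<le> 0\<close>] by blast
  show False
  proof (rule steep_growth_contradicts_powr_lower_bound[OF \<open>k \<le> 0\<close> \<open>c > 0\<close>])
    show "\<forall>\<^sub>F t in at_right 0. (flux has_real_derivative D_v t + D_u t) (at t)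
        \<and> c * t powr (6 * k) / t \<le> D_v t + D_u t"
      using D eventually_at_right_less[of 0] by eventually_elim (use flux_has_derivative y_ne_0 in blast)
    show "\<forall>\<^sub>F t in at_right 0. - C * t powr (4 * k) \<le> flux t"
      using B eventually_at_right_less[of 0] by eventually_elim (use flux_eq_flux_uv y_ne_0 in simp)
  qed
qed

lemma r_sq_uv_bound_at_top:
  "\<forall>\<^sub>F r in at_top. \<bar>r\<^sup>2 * (u r * v r)\<bar> \<le> r\<^sup>2 * (Cw * r powr pw * exp (- sqrt \<gamma> * r))\<^sup>2"
  using uv_decay
proof eventually_elim
  case (elim r)
  then have "\<bar>u r\<bar> * \<bar>v r\<bar> \<le> (Cw * r powr pw * exp (- sqrt \<gamma> * r))\<^sup>2"
    unfolding power2_eq_square by (intro mult_mono) auto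
  then show ?case by (simp add: abs_mult mult_left_mono)
qed

lemma r_sq_uv_tendsto_top: "((\<lambda>r. r\<^sup>2 * (u r * v r)) \<longlongrightarrow> 0) at_top"
proof (rule Lim_null_comparison)
  show "\<forall>\<^sub>F r in at_top. norm (r\<^sup>2 * (u r * v r)) \<le> r\<^sup>2 * (Cw * r powr pw * exp (- sqrt \<gamma> * r))\<^sup>2"
    using r_sq_uv_bound_at_top by simp
  have "sqrt \<gamma> > 0" using \<gamma>_pos by simp
  then have "((\<lambda>r. Cw\<^sup>2 * (r\<^sup>2 * (r powr pw * exp (- sqrt \<gamma> * r))\<^sup>2)) \<longlongrightarrow> Cw\<^sup>2 * 0) at_top"
    by (intro tendsto_mult tendsto_const) real_asymp
  then show "((\<lambda>r. r\<^sup>2 * (Cw * r powr pw * exp (- sqrt \<gamma> * r))\<^sup>2) \<longlongrightarrow> 0) at_top"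
    by (simp add: power_mult_distrib mult_ac)
qed

lemma v_tendsto_top: "(v \<longlongrightarrow> 0) at_top"
proof (rule Lim_null_comparison)
  show "\<forall>\<^sub>F r in at_top. norm (v r) \<le> Cw * r powr pw * exp (- sqrt \<gamma> * r)"
    using uv_decay by eventually_elim simp
  have "sqrt \<gamma> > 0" using \<gamma>_pos by simp
  then show "((\<lambda>r. Cw * r powr pw * exp (- sqrt \<gamma> * r)) \<longlongrightarrow> 0) at_top" by real_asymp
qed

lemma flux_uv_eq_at_top:
  "r > 0 \<Longrightarrow> flux_uv r = - (r\<^sup>2 * (u r * v r)) * (\<gamma> * (s r)\<^sup>2 / 2 + \<kappa> * (v r)\<^sup>2) / (r * y r)"
  unfolding flux_uv_def by (cases "y r = 0") (simp_all add: field_simps power2_eq_square)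

lemma flux_uv_tendsto_top_if_K_ne_0:
  assumes "K \<noteq> 0" shows "(flux_uv \<longlongrightarrow> 0) at_top"
proof -
  have "((\<lambda>r. - (r\<^sup>2 * (u r * v r)) * (\<gamma> * (s r)\<^sup>2 / 2 + \<kappa> * (v r)\<^sup>2) / (r * y r))
      \<longlongrightarrow> - 0 * (\<gamma> * 1\<^sup>2 / 2 + \<kappa> * 0\<^sup>2) / (- K / 2)) at_top"
    using assms by (intro tendsto_intros r_sq_uv_tendsto_top s_tendsto_top v_tendsto_top r_y_tendsto_top) auto
  moreover have "\<forall>\<^sub>F r in at_top.
      - (r\<^sup>2 * (u r * v r)) * (\<gamma> * (s r)\<^sup>2 / 2 + \<kappa> * (v r)\<^sup>2) / (r * y r) = flux_uv r"
    using eventually_gt_at_top[of 0] by eventually_elim (simp add: flux_uv_eq_at_top)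
  ultimately show ?thesis by (simp add: tendsto_cong)
qed

text \<open>In the critical case \<open>r y = a\<close> decays, but only like \<open>exp(-3r/2)\<close>, slower than \<open>u v\<close>.\<close>
lemma flux_uv_tendsto_top_if_critical:
  assumes "\<gamma> = 1" and "K = 0" shows "(flux_uv \<longlongrightarrow> 0) at_top"
proof -
  obtain R c where "R > 0" "c > 0" and a_ge: "\<And>r. r \<ge> R \<Longrightarrow> c * exp (- (3/2) * r) \<le> a r"
    using a_exp_lower_bound by blast
  have r_y: "r * y r = a r" if "r > 0" for r using r_y_eq[OF that] assms by simp
  have "((\<lambda>r. r\<^sup>2 * (u r * v r) / a r) \<longlongrightarrow> 0) at_top"
  proof (rule Lim_null_comparison)
    show "\<forall>\<^sub>F r in at_top. norm (r\<^sup>2 * (u r * v r) / a r)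
        \<le> r\<^sup>2 * (Cw * r powr pw * exp (- 1 * r))\<^sup>2 / (c * exp (- (3/2) * r))"
      using r_sq_uv_bound_at_top eventually_ge_at_top[of R]
    proof eventually_elim
      case (elim r)
      have "0 < c * exp (- (3/2) * r)" using \<open>c > 0\<close> by simp
      also have "\<dots> \<le> a r" using a_ge elim(2) .
      finally have "0 < a r" .
      have "norm (r\<^sup>2 * (u r * v r) / a r) = \<bar>r\<^sup>2 * (u r * v r)\<bar> / a r"
        using \<open>0 < a r\<close> by (simp add: abs_div)
      also have "\<dots> \<le> r\<^sup>2 * (Cw * r powr pw * exp (- 1 * r))\<^sup>2 / a r"
        using elim(1) \<open>0 < a r\<close> assms(1) by (intro divide_right_mono) auto
      also have "\<dots> \<le> r\<^sup>2 * (Cw * r powr pw * exp (- 1 * r))\<^sup>2 / (c * exp (- (3/2) * r))"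
        using a_ge[OF elim(2)] \<open>c > 0\<close> \<open>0 < a r\<close> by (intro divide_left_mono) (auto intro!: mult_pos_pos)
      finally show ?case .
    qed
    have "((\<lambda>r. Cw\<^sup>2 / c * (r\<^sup>2 * (r powr pw * exp (- 1 * r))\<^sup>2 / exp (- (3/2) * r))) \<longlongrightarrow> Cw\<^sup>2 / c * 0) at_top"
      by (intro tendsto_mult tendsto_const) real_asymp
    then show "((\<lambda>r. r\<^sup>2 * (Cw * r powr pw * exp (- 1 * r))\<^sup>2 / (c * exp (- (3/2) * r))) \<longlongrightarrow> 0) at_top"
      by (simp add: power_mult_distrib mult_ac)
  qed
  then have "((\<lambda>r. - (r\<^sup>2 * (u r * v r) / a r) * (\<gamma> * (s r)\<^sup>2 / 2 + \<kappa> * (v r)\<^sup>2))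
      \<longlongrightarrow> - 0 * (\<gamma> * 1\<^sup>2 / 2 + \<kappa> * 0\<^sup>2)) at_top"
    by (intro tendsto_intros s_tendsto_top v_tendsto_top) simp_all
  moreover have "\<forall>\<^sub>F r in at_top.
      - (r\<^sup>2 * (u r * v r) / a r) * (\<gamma> * (s r)\<^sup>2 / 2 + \<kappa> * (v r)\<^sup>2) = flux_uv r"
    using eventually_gt_at_top[of 0] by eventually_elim (simp add: flux_uv_eq_at_top r_y)
  ultimately show ?thesis by (simp add: tendsto_cong)
qed

lemma flux_uv_tendsto_top_if_outside:
  assumes "\<not> (- 2 * n < m \<and> m < 0)" shows "(flux_uv \<longlongrightarrow> 0) at_top"
proof (cases "K = 0")
  case True
  then have "m < 0" unfolding K_def using \<gamma>_pos n_ge_1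
    by (smt (verit) mult_pos_pos of_int_0_less_iff of_int_less_0_iff)
  then have "2 * \<gamma> * of_int n \<ge> 2 * of_int n" using True assms unfolding K_def by simp
  then have "\<gamma> = 1" using \<gamma>_le_1 n_ge_1 by simp
  then show ?thesis using flux_uv_tendsto_top_if_critical True by simp
qed (rule flux_uv_tendsto_top_if_K_ne_0)

lemma flux_uv_tendsto_0_if_outside:
  assumes "\<not> (- 2 * n < m \<and> m < 0)" shows "(flux_uv \<longlongrightarrow> 0) (at_right 0)"
proof (cases "m = 0")
  case True
  consider "\<kappa> = 0 \<or> k > 0" | "nl" "k \<le> 0" "u0 = 0 \<or> v0 = 0" | "nl" "k \<le> 0" "u0 \<noteq> 0" "v0 \<noteq> 0"
    unfolding \<kappa>_def by fastforce
  then show ?thesis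
  proof cases
    case 1
    then show ?thesis using flux_uv_tendsto_0_if_m_eq_0[OF True] by simp
  next
    case 2
    have "\<forall>\<^sub>F r in at_right 0. flux_uv r = 0"
      using eventually_at_right_less[of 0]
    proof eventually_elim
      case (elim r)
      then show ?case unfolding flux_uv_def using 2 uv_near_0[OF elim] by auto
    qed
    then show ?thesis by (rule tendsto_eventually)
  next
    case 3
    then show ?thesis
      using small_k_impossible_if_m_eq_0[OF sign_condition_if_outside[OF assms] True] by simp
  qed
qed (rule flux_uv_tendsto_0_if_m_ne_0)

theorem uv_vanish_if_outside:
  assumes outside: "\<not> (- 2 * n < m \<and> m < 0)" shows "\<forall>r>0. u r = 0 \<and> v r = 0"
proof -
  have sign: "sign_condition" by (rule sign_condition_if_outside[OF outside])
  have D_0: "D_v r + D_u r = 0" if "r > 0" for r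
    by (rule D_eq_0_if_flux_uv_tendsto_0[OF sign flux_uv_tendsto_0_if_outside[OF outside]
          flux_uv_tendsto_top_if_outside[OF outside] that])
  obtain e where "e > 0" and s_ne_0: "\<And>r. 0 < r \<Longrightarrow> r < e \<Longrightarrow> s r \<noteq> 0"
    using s_nonzero_near_0 unfolding eventually_at_right_field by auto
  have u_0: "u r = 0" if "0 < r" "r < e" for r
    using u_eq_0_if_D_eq_0[OF sign that(1) s_ne_0[OF that] D_0[OF that(1)]] .
  have "u0 = 0"
    by (rule u0_eq_0_if_vanishing) (use u_0 \<open>e > 0\<close> in \<open>auto simp: eventually_at_right_field\<close>)
  moreover have "v0 = 0"
  proof (cases "m = 0")
    case True
    have "v r = 0" if "0 < r" "r < e" for r
      using v_eq_0_if_D_eq_0[OF sign that(1) s_ne_0[OF that] y_ne_z_if_m_eq_0[OF True that(1)]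
          D_0[OF that(1)]] .
    then show ?thesis
      by (intro v0_eq_0_if_vanishing) (use \<open>e > 0\<close> in \<open>auto simp: eventually_at_right_field\<close>)
  qed (use v0_eq_0_if_u_vanishes[OF sign _ \<open>e > 0\<close> u_0] in auto)
  ultimately show ?thesis using uv_near_0 by simp
qed

end

lemma NO_vortex_imp_NO_profile:
  assumes "n \<ge> 1" and "NO_vortex n \<beta> s z"
  obtains s0 z0 es ez C \<mu> where "NO_profile n s z s0 z0 es ez C \<mu>"
proof -
  note NO = assms(2)[unfolded NO_vortex_def]
  obtain s0 es where "(es \<longlongrightarrow> 0) (at_right 0)" "\<forall>r>0. s r = s0 * r ^ nat n * (1 + es r)"
    using NO by blast
  moreover obtain z0 ez where "(ez \<longlongrightarrow> 0) (at_right 0)" "\<forall>r>0. z r = of_int n / r + z0 * r + r * ez r"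
    using NO by blast
  moreover obtain C \<mu> where "\<mu> > 0"
    "\<forall>\<^sub>F r in at_top. \<bar>s r - 1\<bar> \<le> C * exp (- \<mu> * r) \<and> \<bar>z r\<bar> \<le> C * exp (- \<mu> * r)"
    using NO by blast
  ultimately have "NO_profile n s z s0 z0 es ez C \<mu>"
    using NO assms(1) by unfold_locales auto
  then show thesis by (rule that)
qed

lemma W_profile_if_W_eqs:
  assumes "NO_profile n s z s0 z0 es ez C \<mu>" and "0 < \<gamma>" and "\<gamma> \<le> 1"
    and "W_eqs nl \<gamma> s y u v" and "y = (\<lambda>r. \<gamma> * z r - (2 * \<gamma> * of_int n + of_int m) / (2 * r))"
    and "W_bc \<gamma> u v"
  obtains k u0 v0 eu ev Cw pw
  where "W_profile n s z s0 z0 es ez C \<mu> m \<gamma> y u v nl k u0 v0 eu ev Cw pw"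
proof -
  note bc = assms(6)[unfolded W_bc_def]
  obtain k u0 v0 eu ev where "k > - 1/2" "(eu \<longlongrightarrow> 0) (at_right 0)" "(ev \<longlongrightarrow> 0) (at_right 0)"
    "\<forall>r>0. u r = u0 * r powr k * (1 + eu r) \<and> v r = v0 * r powr k * (1 + ev r)"
    using bc by blast
  moreover obtain Cw pw where "\<forall>\<^sub>F r in at_top. \<bar>u r\<bar> \<le> Cw * r powr pw * exp (- sqrt \<gamma> * r) \<and>
      \<bar>v r\<bar> \<le> Cw * r powr pw * exp (- sqrt \<gamma> * r)"
    using bc by blast
  ultimately have "W_profile n s z s0 z0 es ez C \<mu> m \<gamma> y u v nl k u0 v0 eu ev Cw pw"
    using assms(1-5) unfolding W_profile_def W_profile_axioms_def by auto
  then show thesis by (rule that)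
qed

theorem theorem2:
  fixes n m :: int and \<beta> \<gamma> :: real and s z u v :: "real \<Rightarrow> real"
  assumes "n \<ge> 1" and "\<beta> > 0" and "0 < \<gamma>" and "\<gamma> \<le> 1"
    and "NO_vortex n \<beta> s z"
    and "\<not> (\<forall>r>0. u r = 0 \<and> v r = 0)"
    and "W_eqs True \<gamma> s (\<lambda>r. \<gamma> * z r - (2 * \<gamma> * of_int n + of_int m) / (2 * r)) u v
         \<or> W_eqs False \<gamma> s (\<lambda>r. \<gamma> * z r - (2 * \<gamma> * of_int n + of_int m) / (2 * r)) u v"
    and "W_bc \<gamma> u v"
  shows "- 2 * n < m \<and> m < 0"
proof (rule ccontr)
  assume outside: "\<not> (- 2 * n < m \<and> m < 0)"
  obtain s0 z0 es ez C \<mu> where NO: "NO_profile n s z s0 z0 es ez C \<mu>"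
    using NO_vortex_imp_NO_profile[OF assms(1,5)] by blast
  obtain nl where "W_eqs nl \<gamma> s (\<lambda>r. \<gamma> * z r - (2 * \<gamma> * of_int n + of_int m) / (2 * r)) u v"
    using assms(7) by blast
  then obtain k u0 v0 eu ev Cw pw where "W_profile n s z s0 z0 es ez C \<mu> m \<gamma>
      (\<lambda>r. \<gamma> * z r - (2 * \<gamma> * of_int n + of_int m) / (2 * r)) u v nl k u0 v0 eu ev Cw pw"
    using W_profile_if_W_eqs[OF NO assms(3,4) _ refl assms(8)] by blast
  then have "\<forall>r>0. u r = 0 \<and> v r = 0" using outside by (rule W_profile.uv_vanish_if_outside)
  with assms(6) show False by blast
qed

end
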